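(* Let $\mathcal C$ be an operadic category such that for each morphism $\theta:c\to e$ of $\mathcal C$ the functor $\theta/R_e:\theta/(\mathcal C/e)\to R_e(\theta)/\mathcal C^{|e|}$ has a weak right adjoint $S_\theta$ whose counit components (as morphisms of $\mathcal C^{|e|}$) are fibrewise trivial. Then the skew monoidal category $\mathrm{Coll}_{\mathcal C}^U$ (whose underlying category is equivalent to $[\mathbb C^{\mathrm{op}},\mathbf{Set}]$) is Hopf, i.e. its associativity map is invertible.
   Context: Operadic categories: $\mathcal S$ is a skeleton of finite sets, with fixed equivalences $R_I:\mathcal S/I\to\mathcal S^I$ sending $f:J\to I$ to its fibres. An operadic category is a category $\mathcal C$ with a functor $|\cdot|:\mathcal C\to\mathcal S$ and functors $R_c:\mathcal C/c\to\mathcal C^{|c|}$ with $|\cdot|^{|c|}\circ R_c=R_{|c|}\circ(|\cdot|/c)$; the fibre $\psi^{-1}i$ of $\psi:c\to d$ at $i\in|d|$ is the $i$-th component of $R_d(\psi)$; for $\varphi:b\to c,\psi:c\to d$, $\varphi^\psi=R_d(\varphi:\psi\varphi\to\psi)$ with components $\varphi^\psi_j:(\psi\varphi)^{-1}j\to\psi^{-1}j$; $u$ is trivial if $|u|=1$ and $R_u=\mathrm{dom}$. Axioms: fibres of identities are trivial; double slice condition: for $\psi:c\to d$, $R_c\circ(\mathrm{dom}/\psi)=(\cong)\circ(\prod_jR_{\psi^{-1}j})\circ(R_d/\psi)$ as functors $(\mathcal C/d)/\psi\to\mathcal C^{|c|}$, via $\mathcal C^{|d|}/R_d\psi\cong\prod_j\mathcal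 C/\psi^{-1}j$ and $|c|\cong\sum_j|\psi|^{-1}j$. A morphism of $\mathcal C$ is fibrewise trivial if all its fibres are trivial; a morphism of $\mathcal C^{|e|}$ is fibrewise trivial if each component is; the fibrewise trivial morphisms form a wide subcategory $\mathbb C$ of $\mathcal C$. For a functor $F:\mathcal A\to\mathcal B$ and $a\in\mathcal A$, $a/F:a/\mathcal A\to Fa/\mathcal B$ is the induced functor on coslices. Thus $\theta/R_e$ sends an object of $\theta/(\mathcal C/e)$, i.e. a factorization $\theta=\psi\varphi$ with $\varphi:c\to d,\psi:d\to e$, to $\varphi^\psi:R_e(\theta)\to R_e(\psi)$. A weak right adjoint to a functor $R:\mathcal A\to\mathcal B$ consists of, for each $B\in\mathcal B$, an object $SB\in\mathcal A$ and a morphism (counit component) $\sigma_B:RSB\to B$, such that for every $A\in\mathcal A$ and every $\tau:RA\to B$ there exists (not necessarily unique) $\pi:A\to SB$ with $\sigma_B\circ R\pi=\tau$. (The counit components of $S_\theta$ are morphisms of the coslice $R_e(\theta)/\mathcal C^{|e|}$, and the hypothesis is that their underlying morphisms in $\mathcal C^{|e|}$ are fibrewise trivial.) $\mathrm{Coll}_{\mathcal C}$ is the skew monoidal category with underlying category $\mathbf{Set}/C$ ($C$ = object set; $X_c=\partial^{-1}c$), tensor $(X*Y)_c=\sum_{\varphi:c\to d}X_d\times\prod_{i\in|d|}Y_{\varphi^{-1}i}$, unit $U$ the set of trivial objects, maps $\alpha(x,\psi,y,\varphi,z)=(x,\psi\varphi,y,\varphi^\psi,z)$, $\lambda(u,\varphi,x)=x$,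 $\rho(x)=(x,1_{\partial x},(1_{\partial x}^{-1}i)_i)$. $\mathrm{Coll}_{\mathcal C}^U$ is the category of right $U$-modules ($X$ with $r:X*U\to X$, $r(r*1)=r(1*\lambda)\alpha$, $r\rho=1$; equivalently presheaves on $\mathbb C$), with tensor $X\wedge Y$ the coequalizer $p:X*Y\to X\wedge Y$ of $r_X*1$ and $(1*\lambda)\alpha:(X*U)*Y\to X*Y$ (with induced action $r$ given by $r(p*1)=p(1*r_Y)\alpha$), unit $U$, and associativity $(X\wedge Y)\wedge Z\to X\wedge(Y\wedge Z)$ the map induced by $\alpha$ through the quotient maps (likewise for the unit maps). *)

theory Defs
  imports Main
begin

text \<open>The skeleton S of finite sets: the object n is the set {0..<n}; a morphism
n -> m is a function nat => nat (only its values on {0..<n} matter).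
The fixed equivalences R_I are the canonical ones: the fibre of f over i is
identified with {0..<card fibre} via the order-preserving enumeration.\<close>

definition sk_enum :: "(nat \<Rightarrow> nat) \<Rightarrow> nat \<Rightarrow> nat \<Rightarrow> nat \<Rightarrow> nat" where
  "sk_enum f m i k = sorted_list_of_set {j. j < m \<and> f j = i} ! k"

definition sk_rank :: "(nat \<Rightarrow> nat) \<Rightarrow> nat \<Rightarrow> nat \<Rightarrow> nat" where
  "sk_rank f i j = card {j'. j' < j \<and> f j' = i}"

text \<open>Data of an operadic category: a category (objects of type 'o, morphisms of
type 'm), the cardinality functor (crd on objects, crdm on morphisms), and the
fibre functors R_c: fib psi i is the i-th fibre of psi, and
fibm psi phi i is the i-th component of phi^psi = R_d(phi : psi phi -> psi).\<close>

record ('o, 'm) opcat =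
  ob :: "'o set"
  mor :: "'m set"
  src :: "'m \<Rightarrow> 'o"
  tgt :: "'m \<Rightarrow> 'o"
  cmp :: "'m \<Rightarrow> 'm \<Rightarrow> 'm"
  ide :: "'o \<Rightarrow> 'm"
  crd :: "'o \<Rightarrow> nat"
  crdm :: "'m \<Rightarrow> nat \<Rightarrow> nat"
  fib :: "'m \<Rightarrow> nat \<Rightarrow> 'o"
  fibm :: "'m \<Rightarrow> 'm \<Rightarrow> nat \<Rightarrow> 'm"

definition hom :: "('o, 'm, 'x) opcat_scheme \<Rightarrow> 'o \<Rightarrow> 'o \<Rightarrow> 'm set" where
  "hom C a b = {f \<in> mor C. src C f = a \<and> tgt C f = b}"

definition is_category :: "('o, 'm, 'x) opcat_scheme \<Rightarrow> bool" where
  "is_category C \<longleftrightarrow>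
    (\<forall>f\<in>mor C. src C f \<in> ob C \<and> tgt C f \<in> ob C) \<and>
    (\<forall>c\<in>ob C. ide C c \<in> hom C c c) \<and>
    (\<forall>f\<in>mor C. \<forall>g\<in>mor C. tgt C f = src C g \<longrightarrow>
        cmp C g f \<in> hom C (src C f) (tgt C g)) \<and>
    (\<forall>f\<in>mor C. cmp C f (ide C (src C f)) = f \<and> cmp C (ide C (tgt C f)) f = f) \<and>
    (\<forall>f\<in>mor C. \<forall>g\<in>mor C. \<forall>h\<in>mor C. tgt C f = src C g \<and> tgt C g = src C h \<longrightarrow>
        cmp C h (cmp C g f) = cmp C (cmp C h g) f)"

definition card_functor :: "('o, 'm, 'x) opcat_scheme \<Rightarrow> bool" where
  "card_functor C \<longleftrightarrow>
    (\<forall>f\<in>mor C. \<forall>j<crd C (src C f). crdm C f j < crd C (tgt C f)) \<and>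
    (\<forall>c\<in>ob C. \<forall>j<crd C c. crdm C (ide C c) j = j) \<and>
    (\<forall>f\<in>mor C. \<forall>g\<in>mor C. tgt C f = src C g \<longrightarrow>
        (\<forall>j<crd C (src C f). crdm C (cmp C g f) j = crdm C g (crdm C f j)))"

definition fibre_functors :: "('o, 'm, 'x) opcat_scheme \<Rightarrow> bool" where
  "fibre_functors C \<longleftrightarrow>
    (\<forall>\<psi>\<in>mor C. \<forall>i<crd C (tgt C \<psi>). fib C \<psi> i \<in> ob C) \<and>
    (\<forall>\<psi>\<in>mor C. \<forall>\<phi>\<in>mor C. tgt C \<phi> = src C \<psi> \<longrightarrow>
        (\<forall>i<crd C (tgt C \<psi>). fibm C \<psi> \<phi> i \<in> hom C (fib C (cmp C \<psi> \<phi>) i) (fib C \<psi> i))) \<and>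
    (\<forall>\<psi>\<in>mor C. \<forall>i<crd C (tgt C \<psi>). fibm C \<psi> (ide C (src C \<psi>)) i = ide C (fib C \<psi> i)) \<and>
    (\<forall>\<psi>\<in>mor C. \<forall>\<phi>\<in>mor C. \<forall>\<chi>\<in>mor C. tgt C \<chi> = src C \<phi> \<and> tgt C \<phi> = src C \<psi> \<longrightarrow>
        (\<forall>i<crd C (tgt C \<psi>).
           fibm C \<psi> (cmp C \<phi> \<chi>) i = cmp C (fibm C \<psi> \<phi> i) (fibm C (cmp C \<psi> \<phi>) \<chi> i)))"

text \<open>Compatibility |.|^{|c|} o R_c = R_{|c|} o (|.|/c).\<close>
definition card_compat :: "('o, 'm, 'x) opcat_scheme \<Rightarrow> bool" where
  "card_compat C \<longleftrightarrow>
    (\<forall>\<psi>\<in>mor C. \<forall>i<crd C (tgt C \<psi>).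
        crd C (fib C \<psi> i) = card {j. j < crd C (src C \<psi>) \<and> crdm C \<psi> j = i}) \<and>
    (\<forall>\<psi>\<in>mor C. \<forall>\<phi>\<in>mor C. tgt C \<phi> = src C \<psi> \<longrightarrow>
        (\<forall>i<crd C (tgt C \<psi>). \<forall>k<crd C (fib C (cmp C \<psi> \<phi>) i).
           crdm C (fibm C \<psi> \<phi> i) k =
             sk_rank (crdm C \<psi>) i
               (crdm C \<phi> (sk_enum (crdm C (cmp C \<psi> \<phi>)) (crd C (src C \<phi>)) i k))))"

definition trivial_ob :: "('o, 'm, 'x) opcat_scheme \<Rightarrow> 'o \<Rightarrow> bool" where
  "trivial_ob C u \<longleftrightarrow> u \<in> ob C \<and> crd C u = 1 \<and>
    (\<forall>\<psi>\<in>mor C. tgt C \<psi> = u \<longrightarrow> fib C \<psi> 0 = src C \<psi>) \<and>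
    (\<forall>\<psi>\<in>mor C. \<forall>\<phi>\<in>mor C. tgt C \<psi> = u \<and> tgt C \<phi> = src C \<psi> \<longrightarrow> fibm C \<psi> \<phi> 0 = \<phi>)"

text \<open>Double slice condition, with |c| = sum_j |psi|^{-1} j reindexed by
j |-> (|psi| j, rank of j in its fibre).\<close>
definition double_slice :: "('o, 'm, 'x) opcat_scheme \<Rightarrow> bool" where
  "double_slice C \<longleftrightarrow>
    (\<forall>\<psi>\<in>mor C. \<forall>\<phi>\<in>mor C. tgt C \<phi> = src C \<psi> \<longrightarrow>
       (\<forall>j<crd C (src C \<psi>).
          fib C \<phi> j = fib C (fibm C \<psi> \<phi> (crdm C \<psi> j)) (sk_rank (crdm C \<psi>) (crdm C \<psi> j) j))) \<and>
    (\<forall>\<psi>\<in>mor C. \<forall>\<phi>\<in>mor C. \<forall>\<chi>\<in>mor C. tgt C \<chi> = src C \<phi> \<and> tgt C \<phi> = src C \<psi> \<longrightarrow>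
       (\<forall>j<crd C (src C \<psi>).
          fibm C \<phi> \<chi> j =
            fibm C (fibm C \<psi> \<phi> (crdm C \<psi> j)) (fibm C (cmp C \<psi> \<phi>) \<chi> (crdm C \<psi> j))
                 (sk_rank (crdm C \<psi>) (crdm C \<psi> j) j)))"

definition operadic_category :: "('o, 'm, 'x) opcat_scheme \<Rightarrow> bool" where
  "operadic_category C \<longleftrightarrow>
    is_category C \<and> card_functor C \<and> fibre_functors C \<and> card_compat C \<and>
    (\<forall>c\<in>ob C. \<forall>i<crd C c. trivial_ob C (fib C (ide C c) i)) \<and>
    double_slice C"

definition fibrewise_trivial :: "('o, 'm, 'x) opcat_scheme \<Rightarrow> 'm \<Rightarrow> bool" where
  "fibrewise_trivial C f \<longleftrightarrow> (\<forall>k<crd C (tgt C f). trivial_ob C (fib C f k))"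

text \<open>An object of R_e(theta)/C^{|e|} is a pair
(x, tau) with tau_i : fib theta i -> x_i; S x tau = (phiB, psiB) is a factorisation
theta = psiB phiB; sigma x tau is the counit component.\<close>
definition weak_right_adjoint_hyp :: "('o, 'm, 'x) opcat_scheme \<Rightarrow> bool" where
  "weak_right_adjoint_hyp C \<longleftrightarrow>
   (\<forall>\<theta>\<in>mor C.
    \<exists>(S :: (nat \<Rightarrow> 'o) \<Rightarrow> (nat \<Rightarrow> 'm) \<Rightarrow> 'm \<times> 'm) (\<sigma> :: (nat \<Rightarrow> 'o) \<Rightarrow> (nat \<Rightarrow> 'm) \<Rightarrow> nat \<Rightarrow> 'm).
     \<forall>x \<tau>. (\<forall>i<crd C (tgt C \<theta>). x i \<in> ob C \<and> \<tau> i \<in> hom C (fib C \<theta> i) (x i)) \<longrightarrow>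
       (let \<phi>B = fst (S x \<tau>); \<psi>B = snd (S x \<tau>) in
         \<phi>B \<in> mor C \<and> \<psi>B \<in> mor C \<and> src C \<phi>B = src C \<theta> \<and> tgt C \<phi>B = src C \<psi>B \<and>
         tgt C \<psi>B = tgt C \<theta> \<and> cmp C \<psi>B \<phi>B = \<theta> \<and>
         (\<forall>i<crd C (tgt C \<theta>).
            \<sigma> x \<tau> i \<in> hom C (fib C \<psi>B i) (x i) \<and>
            cmp C (\<sigma> x \<tau> i) (fibm C \<psi>B \<phi>B i) = \<tau> i \<and>
            fibrewise_trivial C (\<sigma> x \<tau> i)) \<and>
         (\<forall>\<phi>\<in>mor C. \<forall>\<psi>\<in>mor C. \<forall>g.
            src C \<phi> = src C \<theta> \<and> tgt C \<phi> = src C \<psi> \<and> tgt C \<psi> = tgt C \<theta> \<and>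
            cmp C \<psi> \<phi> = \<theta> \<and>
            (\<forall>i<crd C (tgt C \<theta>). g i \<in> hom C (fib C \<psi> i) (x i) \<and>
                                    cmp C (g i) (fibm C \<psi> \<phi> i) = \<tau> i) \<longrightarrow>
            (\<exists>\<kappa>\<in>hom C (src C \<psi>) (src C \<psi>B).
               cmp C \<psi>B \<kappa> = \<psi> \<and> cmp C \<kappa> \<phi> = \<phi>B \<and>
               (\<forall>i<crd C (tgt C \<theta>). cmp C (\<sigma> x \<tau> i) (fibm C \<psi>B \<kappa> i) = g i)))))"

text \<open>An object of Set/C is a set X with a map dX : X -> C.  Elements of X*Y are
triples (x, phi, ys) with phi : c -> d, x in X_d, ys i in Y_{phi^-1 i} for i < |d|
(ys extended by undefined elsewhere); their degree is c.\<close>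

definition tens :: "('o, 'm, 'x) opcat_scheme \<Rightarrow> 'a set \<Rightarrow> ('a \<Rightarrow> 'o) \<Rightarrow> 'b set \<Rightarrow> ('b \<Rightarrow> 'o)
    \<Rightarrow> ('a \<times> 'm \<times> (nat \<Rightarrow> 'b)) set" where
  "tens C X dX Y dY = {(x, \<phi>, ys). \<phi> \<in> mor C \<and> x \<in> X \<and> dX x = tgt C \<phi> \<and>
      (\<forall>i<crd C (tgt C \<phi>). ys i \<in> Y \<and> dY (ys i) = fib C \<phi> i) \<and>
      (\<forall>i. crd C (tgt C \<phi>) \<le> i \<longrightarrow> ys i = undefined)}"

definition tdeg :: "('o, 'm, 'x) opcat_scheme \<Rightarrow> ('a \<times> 'm \<times> (nat \<Rightarrow> 'b)) \<Rightarrow> 'o" where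
  "tdeg C w = (case w of (x, \<phi>, ys) \<Rightarrow> src C \<phi>)"

definition tmap :: "('o, 'm, 'x) opcat_scheme \<Rightarrow> ('a \<Rightarrow> 'a2) \<Rightarrow> ('b \<Rightarrow> 'b2)
    \<Rightarrow> ('a \<times> 'm \<times> (nat \<Rightarrow> 'b)) \<Rightarrow> ('a2 \<times> 'm \<times> (nat \<Rightarrow> 'b2))" where
  "tmap C f g w = (case w of (x, \<phi>, ys) \<Rightarrow>
      (f x, \<phi>, \<lambda>i. if i < crd C (tgt C \<phi>) then g (ys i) else undefined))"

text \<open>The unit U: the set of trivial objects, with degree map the identity.\<close>
definition unitU :: "('o, 'm, 'x) opcat_scheme \<Rightarrow> 'o set" where
  "unitU C = {u. trivial_ob C u}"

definition assoc :: "('o, 'm, 'x) opcat_scheme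
    \<Rightarrow> (('a \<times> 'm \<times> (nat \<Rightarrow> 'b)) \<times> 'm \<times> (nat \<Rightarrow> 'c))
    \<Rightarrow> ('a \<times> 'm \<times> (nat \<Rightarrow> ('b \<times> 'm \<times> (nat \<Rightarrow> 'c))))" where
  "assoc C w = (case w of ((x, \<psi>, ys), \<phi>, zs) \<Rightarrow>
      (x, cmp C \<psi> \<phi>,
       \<lambda>i. if i < crd C (tgt C \<psi>) then
              (ys i, fibm C \<psi> \<phi> i,
               \<lambda>k. if k < crd C (fib C \<psi> i)
                   then zs (sk_enum (crdm C \<psi>) (crd C (src C \<psi>)) i k) else undefined)
            else undefined))"

definition lunit :: "('o \<times> 'm \<times> (nat \<Rightarrow> 'b)) \<Rightarrow> 'b" where
  "lunit w = (case w of (u, \<phi>, xs) \<Rightarrow> xs 0)"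

definition runit :: "('o, 'm, 'x) opcat_scheme \<Rightarrow> ('a \<Rightarrow> 'o) \<Rightarrow> 'a \<Rightarrow> ('a \<times> 'm \<times> (nat \<Rightarrow> 'o))" where
  "runit C dX x = (x, ide C (dX x),
      \<lambda>i. if i < crd C (dX x) then fib C (ide C (dX x)) i else undefined)"

definition rmodule :: "('o, 'm, 'x) opcat_scheme \<Rightarrow> 'a set \<Rightarrow> ('a \<Rightarrow> 'o)
    \<Rightarrow> (('a \<times> 'm \<times> (nat \<Rightarrow> 'o)) \<Rightarrow> 'a) \<Rightarrow> bool" where
  "rmodule C X dX r \<longleftrightarrow>
    (\<forall>x\<in>X. dX x \<in> ob C) \<and>
    (\<forall>w\<in>tens C X dX (unitU C) id. r w \<in> X \<and> dX (r w) = tdeg C w) \<and>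
    (\<forall>w\<in>tens C (tens C X dX (unitU C) id) (tdeg C) (unitU C) id.
        r (tmap C r id w) = r (tmap C id lunit (assoc C w))) \<and>
    (\<forall>x\<in>X. r (runit C dX x) = x)"

definition smash_gen :: "('o, 'm, 'x) opcat_scheme \<Rightarrow> 'a set \<Rightarrow> ('a \<Rightarrow> 'o)
    \<Rightarrow> (('a \<times> 'm \<times> (nat \<Rightarrow> 'o)) \<Rightarrow> 'a) \<Rightarrow> 'b set \<Rightarrow> ('b \<Rightarrow> 'o)
    \<Rightarrow> (('a \<times> 'm \<times> (nat \<Rightarrow> 'b)) \<times> ('a \<times> 'm \<times> (nat \<Rightarrow> 'b))) set" where
  "smash_gen C X dX rX Y dY =
     {(tmap C rX id w, tmap C id lunit (assoc C w)) | w.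
        w \<in> tens C (tens C X dX (unitU C) id) (tdeg C) Y dY}"

definition smash_eq :: "('o, 'm, 'x) opcat_scheme \<Rightarrow> 'a set \<Rightarrow> ('a \<Rightarrow> 'o)
    \<Rightarrow> (('a \<times> 'm \<times> (nat \<Rightarrow> 'o)) \<Rightarrow> 'a) \<Rightarrow> 'b set \<Rightarrow> ('b \<Rightarrow> 'o)
    \<Rightarrow> (('a \<times> 'm \<times> (nat \<Rightarrow> 'b)) \<times> ('a \<times> 'm \<times> (nat \<Rightarrow> 'b))) set" where
  "smash_eq C X dX rX Y dY = (smash_gen C X dX rX Y dY \<union> (smash_gen C X dX rX Y dY)\<inverse>)\<^sup>*"

definition smash :: "('o, 'm, 'x) opcat_scheme \<Rightarrow> 'a set \<Rightarrow> ('a \<Rightarrow> 'o)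
    \<Rightarrow> (('a \<times> 'm \<times> (nat \<Rightarrow> 'o)) \<Rightarrow> 'a) \<Rightarrow> 'b set \<Rightarrow> ('b \<Rightarrow> 'o)
    \<Rightarrow> ('a \<times> 'm \<times> (nat \<Rightarrow> 'b)) set set" where
  "smash C X dX rX Y dY = tens C X dX Y dY // smash_eq C X dX rX Y dY"

definition smash_q :: "('o, 'm, 'x) opcat_scheme \<Rightarrow> 'a set \<Rightarrow> ('a \<Rightarrow> 'o)
    \<Rightarrow> (('a \<times> 'm \<times> (nat \<Rightarrow> 'o)) \<Rightarrow> 'a) \<Rightarrow> 'b set \<Rightarrow> ('b \<Rightarrow> 'o)
    \<Rightarrow> ('a \<times> 'm \<times> (nat \<Rightarrow> 'b)) \<Rightarrow> ('a \<times> 'm \<times> (nat \<Rightarrow> 'b)) set" where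
  "smash_q C X dX rX Y dY w = smash_eq C X dX rX Y dY `` {w}"

definition smash_deg :: "('o, 'm, 'x) opcat_scheme \<Rightarrow> ('a \<times> 'm \<times> (nat \<Rightarrow> 'b)) set \<Rightarrow> 'o" where
  "smash_deg C Q = tdeg C (SOME w. w \<in> Q)"

text \<open>The induced right action on X /\ Y:  r (p * 1) = p (1 * r_Y) alpha.\<close>
definition smash_act :: "('o, 'm, 'x) opcat_scheme \<Rightarrow> 'a set \<Rightarrow> ('a \<Rightarrow> 'o)
    \<Rightarrow> (('a \<times> 'm \<times> (nat \<Rightarrow> 'o)) \<Rightarrow> 'a) \<Rightarrow> 'b set \<Rightarrow> ('b \<Rightarrow> 'o)
    \<Rightarrow> (('b \<times> 'm \<times> (nat \<Rightarrow> 'o)) \<Rightarrow> 'b)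
    \<Rightarrow> (('a \<times> 'm \<times> (nat \<Rightarrow> 'b)) set \<times> 'm \<times> (nat \<Rightarrow> 'o)) \<Rightarrow> ('a \<times> 'm \<times> (nat \<Rightarrow> 'b)) set" where
  "smash_act C X dX rX Y dY rY v = (case v of (Q, \<phi>, us) \<Rightarrow>
      smash_q C X dX rX Y dY (tmap C id rY (assoc C ((SOME w. w \<in> Q), \<phi>, us))))"

text \<open>The associativity map (X /\ Y) /\ Z -> X /\ (Y /\ Z), induced by alpha through
the quotient maps: a (p (p * 1)) = p (1 * p) alpha.  It is evaluated on chosen
representatives.\<close>
definition smash_assoc :: "('o, 'm, 'x) opcat_scheme
    \<Rightarrow> 'a set \<Rightarrow> ('a \<Rightarrow> 'o) \<Rightarrow> (('a \<times> 'm \<times> (nat \<Rightarrow> 'o)) \<Rightarrow> 'a)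
    \<Rightarrow> 'b set \<Rightarrow> ('b \<Rightarrow> 'o) \<Rightarrow> (('b \<times> 'm \<times> (nat \<Rightarrow> 'o)) \<Rightarrow> 'b)
    \<Rightarrow> 'c set \<Rightarrow> ('c \<Rightarrow> 'o)
    \<Rightarrow> (('a \<times> 'm \<times> (nat \<Rightarrow> 'b)) set \<times> 'm \<times> (nat \<Rightarrow> 'c)) set
    \<Rightarrow> ('a \<times> 'm \<times> (nat \<Rightarrow> ('b \<times> 'm \<times> (nat \<Rightarrow> 'c)) set)) set" where
  "smash_assoc C X dX rX Y dY rY Z dZ Q =
     (case (SOME q. q \<in> Q) of (Qxy, \<phi>, zs) \<Rightarrow>
        smash_q C X dX rX (smash C Y dY rY Z dZ) (smash_deg C)
          (tmap C id (smash_q C Y dY rY Z dZ) (assoc C ((SOME w. w \<in> Qxy), \<phi>, zs))))"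

end

theory Submission
  imports Defs
begin

text \<open>For the inverse, take a class
  \<open>[x, \<theta>, ([y\<^sub>i, \<chi>\<^sub>i, z\<^sub>i])\<^sub>i]\<close> in \<open>X \<and> (Y \<and> Z)\<close> and apply the weak right adjoint \<open>S\<^sub>\<theta>\<close> to the
  family \<open>\<chi>\<close>: this yields a factorisation \<open>\<theta> = \<psi> \<phi>\<close> and fibrewise trivial \<open>\<sigma>\<^sub>i\<close> with
  \<open>\<sigma>\<^sub>i \<phi>\<^sup>\<psi>\<^sub>i = \<chi>\<^sub>i\<close>, and the inverse sends the class to \<open>[[x, \<psi>, (y\<^sub>i \<sigma>\<^sub>i)\<^sub>i], \<phi>, z]\<close>, with \<open>z\<close>
  reindexed along \<open>\<sigma>\<close>. Any other such fibrewise trivial factorisation compares to this one by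
  a morphism \<open>\<kappa>\<close>, which is fibrewise trivial because the \<open>\<sigma>\<^sub>i\<close> are; the defining relation of
  \<open>(X \<and> Y) \<and> Z\<close> therefore identifies the two candidate images. This independence of the choice
  makes the inverse well defined on classes, and a direct computation shows that it inverts
  the associativity map.\<close>

section \<open>Fibre enumerations and equivalence closures\<close>

lemma sorted_wrt_less_take_nth:
  fixes xs :: "nat list"
  assumes "sorted_wrt (<) xs" "k < length xs"
  shows "{x \<in> set xs. x < xs ! k} = set (take k xs)"
proof -
  have "x \<in> set (take k xs) \<longleftrightarrow> x \<in> set xs \<and> x < xs ! k" for x
  proof
    assume "x \<in> set (take k xs)"
    then obtain i where "i < k" "x = xs ! i" using assms(2)
      by (auto simp: in_set_conv_nth)
    then show "x \<in> set xs \<and> x < xs ! k" using assms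
      by (metis less_trans nth_mem sorted_wrt_nth_less)
  next
    assume a: "x \<in> set xs \<and> x < xs ! k"
    then obtain i where i: "i < length xs" "x = xs ! i" by (auto simp: in_set_conv_nth)
    have "i < k"
    proof (rule ccontr)
      assume "\<not> i < k"
      then have "xs ! k \<le> xs ! i"
        using assms(1) i(1) by (metis leI le_eq_less_or_eq sorted_wrt_nth_less)
      then show False using a i by simp
    qed
    then show "x \<in> set (take k xs)" using i assms(2)
      by (metis in_set_conv_nth length_take min.absorb4 nth_take order.strict_trans)
  qed
  then show ?thesis by blast
qed

lemma sk_enum_props:
  assumes "k < card {j. j < m \<and> f j = i}"
  shows "sk_enum f m i k < m" "f (sk_enum f m i k) = i"
    "sk_rank f i (sk_enum f m i k) = k"
proof -
  let ?F = "{j. j < m \<and> f j = i}"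
  let ?xs = "sorted_list_of_set ?F"
  have len: "length ?xs = card ?F" by simp
  have mem: "?xs ! k \<in> ?F"
    using assms len nth_mem[of k ?xs] set_sorted_list_of_set[of ?F] by simp
  then show "sk_enum f m i k < m" "f (sk_enum f m i k) = i"
    by (auto simp: sk_enum_def)
  have "{j'. j' < ?xs ! k \<and> f j' = i} = {x \<in> set ?xs. x < ?xs ! k}"
    using mem by auto
  also have "\<dots> = set (take k ?xs)"
    using sorted_wrt_less_take_nth[of ?xs k] assms len by simp
  finally have "{j'. j' < ?xs ! k \<and> f j' = i} = set (take k ?xs)" .
  moreover have "card (set (take k ?xs)) = k"
    using assms len distinct_card[of "take k ?xs"] by simp
  ultimately show "sk_rank f i (sk_enum f m i k) = k"
    unfolding sk_rank_def sk_enum_def by simp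
qed

lemma sk_rank_props:
  assumes "j < m" "f j = i"
  shows "sk_rank f i j < card {j. j < m \<and> f j = i}"
    "sk_enum f m i (sk_rank f i j) = j"
proof -
  let ?F = "{j. j < m \<and> f j = i}"
  let ?xs = "sorted_list_of_set ?F"
  have "j \<in> set ?xs" using assms by simp
  then have "\<exists>k<length ?xs. ?xs ! k = j" by (simp only: in_set_conv_nth)
  then obtain k where k: "k < length ?xs" "?xs ! k = j" by blast
  then have kc: "k < card ?F" by simp
  have e: "sk_enum f m i k = j" unfolding sk_enum_def using k(2) .
  then have "sk_rank f i j = k" using sk_enum_props(3)[OF kc] by simp
  then show "sk_rank f i j < card ?F" "sk_enum f m i (sk_rank f i j) = j" using kc e by simp_all
qed

lemma sk_enum_singleton:
  assumes "card {j. j < m \<and> f j = i} = 1" "j < m" "f j = i"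
  shows "sk_enum f m i 0 = j"
  using sk_rank_props[of j m f i] assms by simp

lemma sk_enum_cong:
  "{j. j < m \<and> f j = i} = {j. j < m' \<and> g j = i'} \<Longrightarrow> sk_enum f m i k = sk_enum g m' i' k"
  unfolding sk_enum_def by simp

lemma sym_closure_preserves:
  assumes "(a, b) \<in> (R \<union> R\<inverse>)\<^sup>*" "P a" "\<And>x y. (x, y) \<in> R \<Longrightarrow> P x \<longleftrightarrow> P y"
  shows "P b"
  using assms(1,2) by induction (use assms(3) in blast)+

lemma sym_closure_respects:
  assumes "(a, b) \<in> (R \<union> R\<inverse>)\<^sup>*" "P a"
    and "\<And>x y. (x, y) \<in> R \<Longrightarrow> P x \<longleftrightarrow> P y"
    and "\<And>x y. (x, y) \<in> R \<Longrightarrow> P x \<Longrightarrow> f x = f y"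
  shows "f a = f b"
  using assms(1,2)
proof (induction rule: rtrancl_induct)
  case (step b c)
  then have "P b" using sym_closure_preserves assms(3) by metis
  then show ?case using step assms(3,4) by auto
qed simp

lemma equiv_sym_closure: "equiv UNIV ((R \<union> R\<inverse>)\<^sup>*)"
  by (simp add: equivI refl_rtrancl sym_Un_converse sym_rtrancl trans_rtrancl)

lemma rtrancl_pointwise_invariant:
  fixes n :: nat
  assumes fg: "\<forall>i<n. (f i, g i) \<in> R\<^sup>*"
    and update: "\<And>h i b. \<forall>j<n. (f j, h j) \<in> R\<^sup>* \<Longrightarrow> i < n \<Longrightarrow> (h i, b) \<in> R \<Longrightarrow> \<Phi> h = \<Phi> (h(i := b))"
  shows "\<Phi> f = \<Phi> (\<lambda>i. if i < n then g i else f i)"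
proof -
  have "\<Phi> f = \<Phi> (\<lambda>i. if i < k then g i else f i)" if "k \<le> n" for k
    using that
  proof (induction k)
    case (Suc k)
    let ?h = "\<lambda>i. if i < k then g i else f i"
    have "\<Phi> ?h = \<Phi> (?h(k := c))" if "(f k, c) \<in> R\<^sup>*" for c
      using that
    proof (induction rule: rtrancl_induct)
      case (step c d)
      have "\<forall>j<n. (f j, (?h(k := c)) j) \<in> R\<^sup>*" using fg step(1) by auto
      then have "\<Phi> (?h(k := c)) = \<Phi> ((?h(k := c))(k := d))"
        using Suc.prems step(2) by (intro update) auto
      then show ?case using step(3) by (metis fun_upd_upd)
    qed (simp add: fun_upd_idem)
    moreover have "?h(k := g k) = (\<lambda>i. if i < Suc k then g i else f i)" by (intro ext) auto
    ultimately show ?case using Suc fg by (metis Suc_le_lessD less_or_eq_imp_le)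
  qed simp
  then show ?thesis by simp
qed

section \<open>Operadic categories\<close>

locale operadic =
  fixes C :: "('o, 'm) opcat"
  assumes operadic: "operadic_category C"
begin

abbreviation ntgt :: "'m \<Rightarrow> nat" where "ntgt f \<equiv> crd C (tgt C f)"
abbreviation nsrc :: "'m \<Rightarrow> nat" where "nsrc f \<equiv> crd C (src C f)"
abbreviation fenum :: "'m \<Rightarrow> nat \<Rightarrow> nat \<Rightarrow> nat" where
  "fenum f i k \<equiv> sk_enum (crdm C f) (nsrc f) i k"
abbreviation frank :: "'m \<Rightarrow> nat \<Rightarrow> nat \<Rightarrow> nat" where
  "frank f i j \<equiv> sk_rank (crdm C f) i j"
abbreviation fwtriv :: "'m \<Rightarrow> bool" where "fwtriv f \<equiv> fibrewise_trivial C f"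
abbreviation triv :: "'o \<Rightarrow> bool" where "triv u \<equiv> trivial_ob C u"

lemma C_category: "is_category C" and C_card_functor: "card_functor C"
  and C_fibre_functors: "fibre_functors C" and C_card_compat: "card_compat C"
  and C_ide_fibres_trivial: "\<forall>c\<in>ob C. \<forall>i<crd C c. triv (fib C (ide C c) i)"
  and C_double_slice: "double_slice C"
  using operadic unfolding operadic_category_def by auto

lemma tgt_ob: "f \<in> mor C \<Longrightarrow> tgt C f \<in> ob C"
  using C_category unfolding is_category_def by auto
lemma ide_mor: "c \<in> ob C \<Longrightarrow> ide C c \<in> mor C"
  and ide_src: "c \<in> ob C \<Longrightarrow> src C (ide C c) = c"
  and ide_tgt: "c \<in> ob C \<Longrightarrow> tgt C (ide C c) = c"
  using C_category unfolding is_category_def hom_def by auto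
lemma cmp_mor: "f \<in> mor C \<Longrightarrow> g \<in> mor C \<Longrightarrow> tgt C f = src C g \<Longrightarrow> cmp C g f \<in> mor C"
  and cmp_src: "f \<in> mor C \<Longrightarrow> g \<in> mor C \<Longrightarrow> tgt C f = src C g \<Longrightarrow> src C (cmp C g f) = src C f"
  and cmp_tgt: "f \<in> mor C \<Longrightarrow> g \<in> mor C \<Longrightarrow> tgt C f = src C g \<Longrightarrow> tgt C (cmp C g f) = tgt C g"
  using C_category unfolding is_category_def hom_def by auto
lemma cmp_ide_left: "f \<in> mor C \<Longrightarrow> cmp C (ide C (tgt C f)) f = f"
  using C_category unfolding is_category_def by auto
lemma cmp_assoc: "f \<in> mor C \<Longrightarrow> g \<in> mor C \<Longrightarrow> h \<in> mor C \<Longrightarrow> tgt C f = src C g \<Longrightarrow>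
    tgt C g = src C h \<Longrightarrow> cmp C h (cmp C g f) = cmp C (cmp C h g) f"
  using C_category unfolding is_category_def by auto

lemma crdm_less: "f \<in> mor C \<Longrightarrow> j < nsrc f \<Longrightarrow> crdm C f j < ntgt f"
  using C_card_functor unfolding card_functor_def by auto
lemma crdm_ide: "c \<in> ob C \<Longrightarrow> j < crd C c \<Longrightarrow> crdm C (ide C c) j = j"
  using C_card_functor unfolding card_functor_def by auto
lemma crdm_cmp: "f \<in> mor C \<Longrightarrow> g \<in> mor C \<Longrightarrow> tgt C f = src C g \<Longrightarrow> j < nsrc f \<Longrightarrow>
    crdm C (cmp C g f) j = crdm C g (crdm C f j)"
  using C_card_functor unfolding card_functor_def by auto

lemma fib_ob: "\<psi> \<in> mor C \<Longrightarrow> i < ntgt \<psi> \<Longrightarrow> fib C \<psi> i \<in> ob C"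
  using C_fibre_functors unfolding fibre_functors_def by auto
lemma fibm_mor: "\<psi> \<in> mor C \<Longrightarrow> \<phi> \<in> mor C \<Longrightarrow> tgt C \<phi> = src C \<psi> \<Longrightarrow> i < ntgt \<psi> \<Longrightarrow>
    fibm C \<psi> \<phi> i \<in> mor C"
  and fibm_src: "\<psi> \<in> mor C \<Longrightarrow> \<phi> \<in> mor C \<Longrightarrow> tgt C \<phi> = src C \<psi> \<Longrightarrow> i < ntgt \<psi> \<Longrightarrow>
    src C (fibm C \<psi> \<phi> i) = fib C (cmp C \<psi> \<phi>) i"
  and fibm_tgt: "\<psi> \<in> mor C \<Longrightarrow> \<phi> \<in> mor C \<Longrightarrow> tgt C \<phi> = src C \<psi> \<Longrightarrow> i < ntgt \<psi> \<Longrightarrow>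
    tgt C (fibm C \<psi> \<phi> i) = fib C \<psi> i"
  using C_fibre_functors unfolding fibre_functors_def hom_def by auto
lemma fibm_cmp: "\<psi> \<in> mor C \<Longrightarrow> \<phi> \<in> mor C \<Longrightarrow> \<chi> \<in> mor C \<Longrightarrow> tgt C \<chi> = src C \<phi> \<Longrightarrow>
    tgt C \<phi> = src C \<psi> \<Longrightarrow> i < ntgt \<psi> \<Longrightarrow>
    fibm C \<psi> (cmp C \<phi> \<chi>) i = cmp C (fibm C \<psi> \<phi> i) (fibm C (cmp C \<psi> \<phi>) \<chi> i)"
  using C_fibre_functors unfolding fibre_functors_def by auto

lemma crd_fib: "\<psi> \<in> mor C \<Longrightarrow> i < ntgt \<psi> \<Longrightarrow>
    crd C (fib C \<psi> i) = card {j. j < nsrc \<psi> \<and> crdm C \<psi> j = i}"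
  using C_card_compat unfolding card_compat_def by auto
lemma crdm_fibm:
  assumes "\<psi> \<in> mor C" "\<phi> \<in> mor C" "tgt C \<phi> = src C \<psi>" "i < ntgt \<psi>"
    "k < crd C (fib C (cmp C \<psi> \<phi>) i)"
  shows "crdm C (fibm C \<psi> \<phi> i) k = frank \<psi> i (crdm C \<phi> (fenum (cmp C \<psi> \<phi>) i k))"
  using C_card_compat assms cmp_src[OF assms(2,1,3)] unfolding card_compat_def by auto

lemma fib_double_slice: "\<psi> \<in> mor C \<Longrightarrow> \<phi> \<in> mor C \<Longrightarrow> tgt C \<phi> = src C \<psi> \<Longrightarrow> j < nsrc \<psi> \<Longrightarrow>
    fib C \<phi> j = fib C (fibm C \<psi> \<phi> (crdm C \<psi> j)) (frank \<psi> (crdm C \<psi> j) j)"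
  using C_double_slice unfolding double_slice_def by auto
lemma fibm_double_slice: "\<psi> \<in> mor C \<Longrightarrow> \<phi> \<in> mor C \<Longrightarrow> \<chi> \<in> mor C \<Longrightarrow> tgt C \<chi> = src C \<phi> \<Longrightarrow>
    tgt C \<phi> = src C \<psi> \<Longrightarrow> j < nsrc \<psi> \<Longrightarrow>
    fibm C \<phi> \<chi> j = fibm C (fibm C \<psi> \<phi> (crdm C \<psi> j)) (fibm C (cmp C \<psi> \<phi>) \<chi> (crdm C \<psi> j))
                 (frank \<psi> (crdm C \<psi> j) j)"
  using C_double_slice unfolding double_slice_def by auto

lemma fenum_props:
  assumes "\<psi> \<in> mor C" "i < ntgt \<psi>" "k < crd C (fib C \<psi> i)"
  shows "fenum \<psi> i k < nsrc \<psi>" "crdm C \<psi> (fenum \<psi> i k) = i" "frank \<psi> i (fenum \<psi> i k) = k"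
  using sk_enum_props assms(3) unfolding crd_fib[OF assms(1,2)] by auto

lemma frank_props:
  assumes "\<psi> \<in> mor C" "j < nsrc \<psi>"
  shows "frank \<psi> (crdm C \<psi> j) j < crd C (fib C \<psi> (crdm C \<psi> j))"
    "fenum \<psi> (crdm C \<psi> j) (frank \<psi> (crdm C \<psi> j) j) = j"
  using sk_rank_props[of j "nsrc \<psi>" "crdm C \<psi>" "crdm C \<psi> j"] assms
  unfolding crd_fib[OF assms(1) crdm_less[OF assms]] by auto

lemma fib_fenum:
  assumes "\<psi> \<in> mor C" "\<phi> \<in> mor C" "tgt C \<phi> = src C \<psi>" "i < ntgt \<psi>" "k < crd C (fib C \<psi> i)"
  shows "fib C \<phi> (fenum \<psi> i k) = fib C (fibm C \<psi> \<phi> i) k"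
  using fib_double_slice[OF assms(1-3) fenum_props(1)[OF assms(1,4,5)]] fenum_props[OF assms(1,4,5)]
  by simp

lemma fibm_fenum:
  assumes "\<psi> \<in> mor C" "\<phi> \<in> mor C" "\<chi> \<in> mor C" "tgt C \<chi> = src C \<phi>"
    "tgt C \<phi> = src C \<psi>" "i < ntgt \<psi>" "k < crd C (fib C \<psi> i)"
  shows "fibm C \<phi> \<chi> (fenum \<psi> i k) = fibm C (fibm C \<psi> \<phi> i) (fibm C (cmp C \<psi> \<phi>) \<chi> i) k"
  using fibm_double_slice[OF assms(1-5) fenum_props(1)[OF assms(1,6,7)]] fenum_props[OF assms(1,6,7)]
  by simp

lemma triv_crd: "triv u \<Longrightarrow> crd C u = 1"
  and triv_fib: "triv u \<Longrightarrow> \<psi> \<in> mor C \<Longrightarrow> tgt C \<psi> = u \<Longrightarrow> fib C \<psi> 0 = src C \<psi>"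
  and triv_fibm: "triv u \<Longrightarrow> \<psi> \<in> mor C \<Longrightarrow> \<phi> \<in> mor C \<Longrightarrow> tgt C \<psi> = u \<Longrightarrow>
     tgt C \<phi> = src C \<psi> \<Longrightarrow> fibm C \<psi> \<phi> 0 = \<phi>"
  unfolding trivial_ob_def by auto

lemma fwtrivD: "fwtriv f \<Longrightarrow> k < ntgt f \<Longrightarrow> triv (fib C f k)"
  unfolding fibrewise_trivial_def by blast

lemma trivial_fibre_preimage:
  assumes \<psi>: "\<psi> \<in> mor C" and i: "i < ntgt \<psi>" and tr: "triv (fib C \<psi> i)"
  shows "fenum \<psi> i 0 < nsrc \<psi>" "crdm C \<psi> (fenum \<psi> i 0) = i"
    "\<And>j. j < nsrc \<psi> \<Longrightarrow> crdm C \<psi> j = i \<Longrightarrow> j = fenum \<psi> i 0"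
proof -
  have c1: "crd C (fib C \<psi> i) = 1" using tr triv_crd by blast
  then show "fenum \<psi> i 0 < nsrc \<psi>" "crdm C \<psi> (fenum \<psi> i 0) = i"
    using fenum_props(1,2)[OF \<psi> i] by simp_all
  show "j = fenum \<psi> i 0" if "j < nsrc \<psi>" "crdm C \<psi> j = i" for j
    using sk_enum_singleton[of "nsrc \<psi>" "crdm C \<psi>" i j] that c1 crd_fib[OF \<psi> i] by simp
qed

text \<open>Over a trivial fibre of \<open>\<psi>\<close>, the fibres of \<open>\<phi>\<close> and of \<open>\<psi> \<phi>\<close> coincide, by the double
  slice condition.\<close>
lemma trivial_fibre_transfer:
  assumes \<psi>: "\<psi> \<in> mor C" and \<phi>: "\<phi> \<in> mor C" and t: "tgt C \<phi> = src C \<psi>"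
    and i: "i < ntgt \<psi>" and tr: "triv (fib C \<psi> i)"
  shows "fib C \<phi> (fenum \<psi> i 0) = fib C (cmp C \<psi> \<phi>) i"
    "\<And>\<chi>. \<chi> \<in> mor C \<Longrightarrow> tgt C \<chi> = src C \<phi> \<Longrightarrow>
        fibm C \<phi> \<chi> (fenum \<psi> i 0) = fibm C (cmp C \<psi> \<phi>) \<chi> i"
    "\<And>k. fenum \<phi> (fenum \<psi> i 0) k = fenum (cmp C \<psi> \<phi>) i k"
    "\<And>j. j < nsrc \<phi> \<Longrightarrow> frank \<phi> (fenum \<psi> i 0) j = frank (cmp C \<psi> \<phi>) i j"
proof -
  let ?e = "fenum \<psi> i 0"
  have k0: "0 < crd C (fib C \<psi> i)" using triv_crd[OF tr] by simp
  note pre = trivial_fibre_preimage[OF \<psi> i tr]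
  note fm = fibm_mor[OF \<psi> \<phi> t i] fibm_tgt[OF \<psi> \<phi> t i] fibm_src[OF \<psi> \<phi> t i]
  show "fib C \<phi> ?e = fib C (cmp C \<psi> \<phi>) i"
    using fib_fenum[OF \<psi> \<phi> t i k0] triv_fib[OF tr fm(1,2)] fm(3) by simp
  show "fibm C \<phi> \<chi> ?e = fibm C (cmp C \<psi> \<phi>) \<chi> i" if \<chi>: "\<chi> \<in> mor C" "tgt C \<chi> = src C \<phi>" for \<chi>
  proof -
    have \<psi>\<phi>: "cmp C \<psi> \<phi> \<in> mor C" "tgt C \<chi> = src C (cmp C \<psi> \<phi>)" "i < ntgt (cmp C \<psi> \<phi>)"
      using cmp_mor[OF \<phi> \<psi> t] cmp_src[OF \<phi> \<psi> t] cmp_tgt[OF \<phi> \<psi> t] \<chi> i by auto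
    note m = fibm_mor[OF \<psi>\<phi>(1) \<chi>(1) \<psi>\<phi>(2,3)] fibm_tgt[OF \<psi>\<phi>(1) \<chi>(1) \<psi>\<phi>(2,3)]
    show ?thesis
      using fibm_fenum[OF \<psi> \<phi> \<chi> t i k0] triv_fibm[OF tr fm(1) m(1) fm(2)] m(2) fm(3) by simp
  qed
  have eqv: "crdm C (cmp C \<psi> \<phi>) j = i \<longleftrightarrow> crdm C \<phi> j = ?e" if j: "j < nsrc \<phi>" for j
  proof -
    have "crdm C \<phi> j < nsrc \<psi>" using crdm_less[OF \<phi> j] t by simp
    then show ?thesis using crdm_cmp[OF \<phi> \<psi> t j] pre by metis
  qed
  have "{j. j < nsrc \<phi> \<and> crdm C \<phi> j = ?e} =
      {j. j < nsrc (cmp C \<psi> \<phi>) \<and> crdm C (cmp C \<psi> \<phi>) j = i}"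
    using eqv cmp_src[OF \<phi> \<psi> t] by auto
  then show "fenum \<phi> ?e k = fenum (cmp C \<psi> \<phi>) i k" for k
    by (rule sk_enum_cong)
  show "frank \<phi> ?e j = frank (cmp C \<psi> \<phi>) i j" if j: "j < nsrc \<phi>" for j
  proof -
    have "{j'. j' < j \<and> crdm C \<phi> j' = ?e} = {j'. j' < j \<and> crdm C (cmp C \<psi> \<phi>) j' = i}"
    proof (rule Collect_cong)
      fix j'
      show "(j' < j \<and> crdm C \<phi> j' = ?e) = (j' < j \<and> crdm C (cmp C \<psi> \<phi>) j' = i)"
        using eqv[of j'] j by (metis order.strict_trans)
    qed
    then show ?thesis unfolding sk_rank_def by simp
  qed
qed

lemma fwtriv_fenum:
  assumes "\<rho> \<in> mor C" "fwtriv \<rho>" "k < ntgt \<rho>"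
  shows "fenum \<rho> k 0 < nsrc \<rho>" "crdm C \<rho> (fenum \<rho> k 0) = k"
  using trivial_fibre_preimage(1,2)[OF assms(1,3) fwtrivD[OF assms(2,3)]] by auto

lemma fwtriv_fenum_crdm:
  assumes "\<rho> \<in> mor C" "fwtriv \<rho>" "j < nsrc \<rho>"
  shows "fenum \<rho> (crdm C \<rho> j) 0 = j"
  using trivial_fibre_preimage(3)[OF assms(1) crdm_less[OF assms(1,3)]
      fwtrivD[OF assms(2) crdm_less[OF assms(1,3)]] assms(3)] by simp

lemma fwtriv_ide: "c \<in> ob C \<Longrightarrow> fwtriv (ide C c)"
  using C_ide_fibres_trivial ide_tgt unfolding fibrewise_trivial_def by simp

lemma fwtriv_cmp:
  assumes "\<rho> \<in> mor C" "\<sigma> \<in> mor C" "tgt C \<sigma> = src C \<rho>" "fwtriv \<rho>" "fwtriv \<sigma>"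
  shows "fwtriv (cmp C \<rho> \<sigma>)"
  unfolding fibrewise_trivial_def
proof (intro allI impI)
  fix l assume "l < ntgt (cmp C \<rho> \<sigma>)"
  then have l: "l < ntgt \<rho>" using cmp_tgt[OF assms(2,1,3)] by simp
  note tr = fwtrivD[OF assms(4) l]
  have "fenum \<rho> l 0 < ntgt \<sigma>" using trivial_fibre_preimage(1)[OF assms(1) l tr] assms(3) by simp
  then show "triv (fib C (cmp C \<rho> \<sigma>) l)"
    using fwtrivD[OF assms(5)] trivial_fibre_transfer(1)[OF assms(1-3) l tr] by metis
qed

lemma fwtriv_cancel:
  assumes "\<sigma> \<in> mor C" "\<beta> \<in> mor C" "tgt C \<beta> = src C \<sigma>" "fwtriv \<sigma>" "fwtriv (cmp C \<sigma> \<beta>)"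
  shows "fwtriv \<beta>"
  unfolding fibrewise_trivial_def
proof (intro allI impI)
  fix k assume "k < ntgt \<beta>"
  then have k: "k < nsrc \<sigma>" using assms(3) by simp
  let ?l = "crdm C \<sigma> k"
  have l: "?l < ntgt \<sigma>" using crdm_less[OF assms(1) k] .
  then have "triv (fib C (cmp C \<sigma> \<beta>) ?l)" using fwtrivD[OF assms(5)] cmp_tgt[OF assms(2,1,3)] by simp
  then show "triv (fib C \<beta> k)"
    using trivial_fibre_transfer(1)[OF assms(1-3) l fwtrivD[OF assms(4) l]]
      fwtriv_fenum_crdm[OF assms(1,4) k] by simp
qed

lemma fwtriv_fibm:
  assumes "\<psi> \<in> mor C" "\<kappa> \<in> mor C" "tgt C \<kappa> = src C \<psi>" "fwtriv \<kappa>" "i < ntgt \<psi>"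
  shows "fwtriv (fibm C \<psi> \<kappa> i)"
  unfolding fibrewise_trivial_def
proof (intro allI impI)
  fix k assume "k < ntgt (fibm C \<psi> \<kappa> i)"
  then have k: "k < crd C (fib C \<psi> i)" using fibm_tgt[OF assms(1,2,3,5)] by simp
  have "fenum \<psi> i k < ntgt \<kappa>" using fenum_props(1)[OF assms(1,5) k] assms(3) by simp
  then show "triv (fib C (fibm C \<psi> \<kappa> i) k)"
    using fwtrivD[OF assms(4)] fib_fenum[OF assms(1,2,3,5) k] by metis
qed

lemma fwtriv_of_fibm:
  assumes "\<psi> \<in> mor C" "\<kappa> \<in> mor C" "tgt C \<kappa> = src C \<psi>"
    and "\<And>i. i < ntgt \<psi> \<Longrightarrow> fwtriv (fibm C \<psi> \<kappa> i)"
  shows "fwtriv \<kappa>"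
  unfolding fibrewise_trivial_def
proof (intro allI impI)
  fix j assume "j < ntgt \<kappa>"
  then have j: "j < nsrc \<psi>" using assms(3) by simp
  let ?i = "crdm C \<psi> j"
  have i: "?i < ntgt \<psi>" using crdm_less[OF assms(1) j] .
  have "frank \<psi> ?i j < ntgt (fibm C \<psi> \<kappa> ?i)"
    using frank_props(1)[OF assms(1) j] fibm_tgt[OF assms(1-3) i] by simp
  then show "triv (fib C \<kappa> j)"
    using fwtrivD[OF assms(4)[OF i]] fib_double_slice[OF assms(1-3) j] by simp
qed

lemma fenum_cmp_fibm:
  assumes "\<psi> \<in> mor C" "\<kappa> \<in> mor C" "tgt C \<kappa> = src C \<psi>" "fwtriv \<kappa>" "i < ntgt \<psi>"
    "k < crd C (fib C \<psi> i)"
  shows "fenum (cmp C \<psi> \<kappa>) i (fenum (fibm C \<psi> \<kappa> i) k 0) = fenum \<kappa> (fenum \<psi> i k) 0"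
proof -
  let ?\<rho> = "fibm C \<psi> \<kappa> i"
  note \<rho> = fibm_mor[OF assms(1-3,5)] fwtriv_fibm[OF assms(1-5)] fibm_tgt[OF assms(1-3,5)]
    fibm_src[OF assms(1-3,5)]
  let ?l = "fenum ?\<rho> k 0"
  have l: "?l < crd C (fib C (cmp C \<psi> \<kappa>) i)" "crdm C ?\<rho> ?l = k"
    using fwtriv_fenum[OF \<rho>(1,2)] assms(6) \<rho>(3,4) by auto
  have i': "i < ntgt (cmp C \<psi> \<kappa>)" using assms(5) cmp_tgt[OF assms(2,1,3)] by simp
  let ?a = "fenum (cmp C \<psi> \<kappa>) i ?l"
  have a: "?a < nsrc \<kappa>" "crdm C (cmp C \<psi> \<kappa>) ?a = i"
    using fenum_props(1,2)[OF cmp_mor[OF assms(2,1,3)] i' l(1)] cmp_src[OF assms(2,1,3)] by auto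
  have ka: "crdm C \<kappa> ?a < nsrc \<psi>" using crdm_less[OF assms(2) a(1)] assms(3) by simp
  have "crdm C \<psi> (crdm C \<kappa> ?a) = i" using a(2) crdm_cmp[OF assms(2,1,3) a(1)] by simp
  then have "fenum \<psi> i k = crdm C \<kappa> ?a"
    using frank_props(2)[OF assms(1) ka] crdm_fibm[OF assms(1-3,5) l(1)] l(2) by simp
  then show ?thesis using fwtriv_fenum_crdm[OF assms(2,4) a(1)] by simp
qed

section \<open>Collections and the tensor product \<open>X \<and> Y\<close>\<close>

text \<open>For fibrewise trivial \<open>f\<close>, \<open>(x, f, fibres f)\<close> is the only element of \<open>X * U\<close> over \<open>f\<close>, so a
  right \<open>U\<close>-module structure is an action of the fibrewise trivial morphisms.\<close>
definition fibres :: "'m \<Rightarrow> nat \<Rightarrow> 'o" where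
  "fibres f = (\<lambda>i. if i < ntgt f then fib C f i else undefined)"

definition ract :: "(('a \<times> 'm \<times> (nat \<Rightarrow> 'o)) \<Rightarrow> 'a) \<Rightarrow> 'a \<Rightarrow> 'm \<Rightarrow> 'a" where
  "ract r x f = r (x, f, fibres f)"

text \<open>Reindexing of a family along a fibrewise trivial \<open>\<psi>\<close>, for which \<open>|\<psi>|\<close> is a bijection.\<close>
definition pull :: "'m \<Rightarrow> (nat \<Rightarrow> 'b) \<Rightarrow> nat \<Rightarrow> 'b" where
  "pull \<psi> ys = (\<lambda>i. if i < ntgt \<psi> then ys (fenum \<psi> i 0) else undefined)"

definition fibre_family :: "'b set \<Rightarrow> ('b \<Rightarrow> 'o) \<Rightarrow> 'm \<Rightarrow> (nat \<Rightarrow> 'b) \<Rightarrow> bool" where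
  "fibre_family Y dY \<phi> ys \<longleftrightarrow>
     (\<forall>i<ntgt \<phi>. ys i \<in> Y \<and> dY (ys i) = fib C \<phi> i) \<and> (\<forall>i. ntgt \<phi> \<le> i \<longrightarrow> ys i = undefined)"

definition action_closed :: "'a set \<Rightarrow> ('a \<Rightarrow> 'o) \<Rightarrow> (('a \<times> 'm \<times> (nat \<Rightarrow> 'o)) \<Rightarrow> 'a) \<Rightarrow> bool" where
  "action_closed X dX r \<longleftrightarrow> (\<forall>x f. x \<in> X \<and> f \<in> mor C \<and> dX x = tgt C f \<and> fwtriv f \<longrightarrow>
      ract r x f \<in> X \<and> dX (ract r x f) = src C f)"

lemma tens_iff: "(x, \<phi>, ys) \<in> tens C X dX Y dY \<longleftrightarrow>
    \<phi> \<in> mor C \<and> x \<in> X \<and> dX x = tgt C \<phi> \<and> fibre_family Y dY \<phi> ys"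
  unfolding tens_def fibre_family_def by auto

lemma fibre_family_unit: "fibre_family (unitU C) id f us \<longleftrightarrow> fwtriv f \<and> us = fibres f"
  unfolding fibre_family_def unitU_def fibrewise_trivial_def fibres_def
  by (auto simp: not_less)

lemma tens_unit_iff: "(x, f, us) \<in> tens C X dX (unitU C) id \<longleftrightarrow>
    f \<in> mor C \<and> x \<in> X \<and> dX x = tgt C f \<and> fwtriv f \<and> us = fibres f"
  unfolding tens_iff fibre_family_unit by simp

lemma tmap_simp:
  "tmap C f g (x, \<phi>, ys) = (f x, \<phi>, \<lambda>i. if i < ntgt \<phi> then g (ys i) else undefined)"
  unfolding tmap_def by simp

lemma assoc_simp: "assoc C ((x, \<psi>, ys), \<phi>, zs) = (x, cmp C \<psi> \<phi>,
       \<lambda>i. if i < ntgt \<psi> then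
              (ys i, fibm C \<psi> \<phi> i,
               \<lambda>k. if k < crd C (fib C \<psi> i) then zs (fenum \<psi> i k) else undefined)
            else undefined)"
  unfolding assoc_def by simp

lemma tdeg_simp: "tdeg C (x, \<phi>, ys) = src C \<phi>"
  unfolding tdeg_def by simp

lemma rmodule_action_closed: "rmodule C X dX r \<Longrightarrow> action_closed X dX r"
  unfolding action_closed_def rmodule_def ract_def
  by (metis tdeg_simp tens_unit_iff)

lemma action_closedD:
  "action_closed X dX r \<Longrightarrow> x \<in> X \<Longrightarrow> f \<in> mor C \<Longrightarrow> dX x = tgt C f \<Longrightarrow> fwtriv f \<Longrightarrow>
      ract r x f \<in> X \<and> dX (ract r x f) = src C f"
  unfolding action_closed_def by blast

lemma ract_ide:
  assumes "rmodule C X dX r" "x \<in> X"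
  shows "ract r x (ide C (dX x)) = x"
proof -
  have "dX x \<in> ob C" "r (runit C dX x) = x" using assms unfolding rmodule_def by blast+
  then show ?thesis unfolding ract_def runit_def fibres_def using ide_tgt by simp
qed

lemma ract_ract:
  assumes m: "rmodule C X dX r" and x: "x \<in> X" "dX x = tgt C \<sigma>"
    and \<sigma>: "\<sigma> \<in> mor C" "fwtriv \<sigma>" and \<kappa>: "\<kappa> \<in> mor C" "tgt C \<kappa> = src C \<sigma>" "fwtriv \<kappa>"
  shows "ract r (ract r x \<sigma>) \<kappa> = ract r x (cmp C \<sigma> \<kappa>)"
proof -
  let ?w = "((x, \<sigma>, fibres \<sigma>), \<kappa>, fibres \<kappa>)"
  have "(x, \<sigma>, fibres \<sigma>) \<in> tens C X dX (unitU C) id"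
    using x \<sigma> by (simp add: tens_unit_iff)
  then have "?w \<in> tens C (tens C X dX (unitU C) id) (tdeg C) (unitU C) id"
    using \<kappa> by (simp add: tens_unit_iff tdeg_simp)
  then have ax: "r (tmap C r id ?w) = r (tmap C id lunit (assoc C ?w))"
    using m unfolding rmodule_def by blast
  have "tmap C r id ?w = (ract r x \<sigma>, \<kappa>, fibres \<kappa>)"
    unfolding tmap_simp ract_def by (simp add: fibres_def fun_eq_iff)
  moreover have "tmap C id lunit (assoc C ?w) = (x, cmp C \<sigma> \<kappa>, fibres (cmp C \<sigma> \<kappa>))"
  proof -
    have "fib C \<kappa> (fenum \<sigma> i 0) = fib C (cmp C \<sigma> \<kappa>) i" "fenum \<sigma> i 0 < ntgt \<kappa>"
      "0 < crd C (fib C \<sigma> i)" if "i < ntgt \<sigma>" for i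
      using trivial_fibre_transfer(1)[OF \<sigma>(1) \<kappa>(1,2) that fwtrivD[OF \<sigma>(2) that]]
        fwtriv_fenum(1)[OF \<sigma>(1,2) that] \<kappa>(2) triv_crd[OF fwtrivD[OF \<sigma>(2) that]] by auto
    then show ?thesis
      unfolding assoc_simp tmap_simp using cmp_tgt[OF \<kappa>(1) \<sigma>(1) \<kappa>(2)]
      by (auto simp: lunit_def fibres_def)
  qed
  ultimately show ?thesis using ax unfolding ract_def by simp
qed

lemma tmap_ract_fibres:
  "fibre_family Y dY \<phi> ys \<Longrightarrow> tmap C r id ((x, \<psi>, fibres \<psi>), \<phi>, ys) = (ract r x \<psi>, \<phi>, ys)"
  unfolding tmap_simp ract_def fibre_family_def by (auto simp: fun_eq_iff)

lemma tmap_lunit_assoc: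
  assumes "\<psi> \<in> mor C" "\<phi> \<in> mor C" "tgt C \<phi> = src C \<psi>" "fwtriv \<psi>"
  shows "tmap C id lunit (assoc C ((x, \<psi>, us), \<phi>, ys)) = (x, cmp C \<psi> \<phi>, pull \<psi> ys)"
proof -
  have "0 < crd C (fib C \<psi> i)" if "i < ntgt \<psi>" for i
    using triv_crd[OF fwtrivD[OF assms(4) that]] by simp
  then show ?thesis
    unfolding assoc_simp tmap_simp using cmp_tgt[OF assms(2,1,3)]
    by (auto simp: lunit_def pull_def fun_eq_iff)
qed

lemma smash_genI:
  assumes "x \<in> X" "\<psi> \<in> mor C" "dX x = tgt C \<psi>" "fwtriv \<psi>" "\<phi> \<in> mor C" "tgt C \<phi> = src C \<psi>"
    "fibre_family Y dY \<phi> ys"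
  shows "((ract rX x \<psi>, \<phi>, ys), (x, cmp C \<psi> \<phi>, pull \<psi> ys)) \<in> smash_gen C X dX rX Y dY"
proof -
  let ?w = "((x, \<psi>, fibres \<psi>), \<phi>, ys)"
  have w: "?w \<in> tens C (tens C X dX (unitU C) id) (tdeg C) Y dY"
    using assms by (simp add: tens_iff fibre_family_unit tdeg_simp)
  have "((ract rX x \<psi>, \<phi>, ys), (x, cmp C \<psi> \<phi>, pull \<psi> ys)) =
      (tmap C rX id ?w, tmap C id lunit (assoc C ?w))"
    using tmap_ract_fibres[OF assms(7), of rX x \<psi>]
      tmap_lunit_assoc[OF assms(2,5,6,4), of x "fibres \<psi>" ys] by simp
  then show ?thesis
    using w unfolding smash_gen_def by blast
qed

lemma smash_genE:
  assumes "(a, b) \<in> smash_gen C X dX rX Y dY"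
  obtains x \<psi> \<phi> ys where "x \<in> X" "\<psi> \<in> mor C" "dX x = tgt C \<psi>" "fwtriv \<psi>" "\<phi> \<in> mor C"
    "tgt C \<phi> = src C \<psi>" "fibre_family Y dY \<phi> ys"
    "a = (ract rX x \<psi>, \<phi>, ys)" "b = (x, cmp C \<psi> \<phi>, pull \<psi> ys)"
proof -
  obtain x \<psi> us \<phi> ys where w: "((x, \<psi>, us), \<phi>, ys) \<in> tens C (tens C X dX (unitU C) id) (tdeg C) Y dY"
    "a = tmap C rX id ((x, \<psi>, us), \<phi>, ys)" "b = tmap C id lunit (assoc C ((x, \<psi>, us), \<phi>, ys))"
    using assms unfolding smash_gen_def by auto
  then have h: "\<psi> \<in> mor C" "x \<in> X" "dX x = tgt C \<psi>" "fwtriv \<psi>" "us = fibres \<psi>" "\<phi> \<in> mor C"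
    "tgt C \<phi> = src C \<psi>" "fibre_family Y dY \<phi> ys"
    by (auto simp: tens_iff fibre_family_unit tdeg_simp)
  show thesis
  proof (rule that[OF h(2,1,3,4,6,7,8)])
    show "a = (ract rX x \<psi>, \<phi>, ys)" using w(2) tmap_ract_fibres[OF h(8)] unfolding h(5) by simp
    show "b = (x, cmp C \<psi> \<phi>, pull \<psi> ys)" using w(3) tmap_lunit_assoc[OF h(1,6,7,4)] by simp
  qed
qed

lemma fibre_family_pull:
  assumes "\<psi> \<in> mor C" "\<phi> \<in> mor C" "tgt C \<phi> = src C \<psi>" "fwtriv \<psi>" "fibre_family Y dY \<phi> ys"
  shows "fibre_family Y dY (cmp C \<psi> \<phi>) (pull \<psi> ys)"
proof -
  have "ys (fenum \<psi> i 0) \<in> Y \<and> dY (ys (fenum \<psi> i 0)) = fib C (cmp C \<psi> \<phi>) i" if "i < ntgt \<psi>" for i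
    using fwtriv_fenum(1)[OF assms(1,4) that] assms(3,5)
      trivial_fibre_transfer(1)[OF assms(1-3) that fwtrivD[OF assms(4) that]]
    unfolding fibre_family_def by auto
  then show ?thesis
    unfolding fibre_family_def pull_def using cmp_tgt[OF assms(2,1,3)] by simp
qed

lemma smash_gen_tens:
  assumes "action_closed X dX rX" "(a, b) \<in> smash_gen C X dX rX Y dY"
  shows "a \<in> tens C X dX Y dY" "b \<in> tens C X dX Y dY" "tdeg C a = tdeg C b"
proof -
  obtain x \<psi> \<phi> ys where h: "x \<in> X" "\<psi> \<in> mor C" "dX x = tgt C \<psi>" "fwtriv \<psi>" "\<phi> \<in> mor C"
    "tgt C \<phi> = src C \<psi>" "fibre_family Y dY \<phi> ys"
    "a = (ract rX x \<psi>, \<phi>, ys)" "b = (x, cmp C \<psi> \<phi>, pull \<psi> ys)"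
    using assms(2) by (rule smash_genE)
  show "a \<in> tens C X dX Y dY" "b \<in> tens C X dX Y dY" "tdeg C a = tdeg C b"
    using h action_closedD[OF assms(1) h(1-4)] cmp_mor[OF h(5,2,6)] cmp_tgt[OF h(5,2,6)]
      cmp_src[OF h(5,2,6)] fibre_family_pull[OF h(2,5,6,4,7)]
    by (simp_all add: tens_iff tdeg_simp)
qed

lemma smash_q_eq_iff:
  "smash_q C X dX rX Y dY w = smash_q C X dX rX Y dY w' \<longleftrightarrow> (w, w') \<in> smash_eq C X dX rX Y dY"
  unfolding smash_q_def smash_eq_def by (simp add: eq_equiv_class_iff[OF equiv_sym_closure])

lemma smash_q_gen:
  "(w, w') \<in> smash_gen C X dX rX Y dY \<Longrightarrow> smash_q C X dX rX Y dY w = smash_q C X dX rX Y dY w'"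
  unfolding smash_q_eq_iff smash_eq_def by blast

lemma smash_q_some: "(w, SOME v. v \<in> smash_q C X dX rX Y dY w) \<in> smash_eq C X dX rX Y dY"
proof -
  have "w \<in> smash_q C X dX rX Y dY w" unfolding smash_q_def smash_eq_def by simp
  then have "(SOME v. v \<in> smash_q C X dX rX Y dY w) \<in> smash_q C X dX rX Y dY w" by (rule someI)
  then show ?thesis unfolding smash_q_def by simp
qed

lemma smash_eq_tens:
  assumes "action_closed X dX rX" "(w, w') \<in> smash_eq C X dX rX Y dY" "w \<in> tens C X dX Y dY"
  shows "w' \<in> tens C X dX Y dY" "tdeg C w' = tdeg C w"
proof -
  have "\<And>a b. (a, b) \<in> smash_gen C X dX rX Y dY \<Longrightarrow>
      (a \<in> tens C X dX Y dY \<and> tdeg C a = tdeg C w) \<longleftrightarrow> (b \<in> tens C X dX Y dY \<and> tdeg C b = tdeg C w)"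
    using smash_gen_tens[OF assms(1)] by metis
  from sym_closure_preserves[of w w' _ "\<lambda>v. v \<in> tens C X dX Y dY \<and> tdeg C v = tdeg C w", OF _ _ this]
  show "w' \<in> tens C X dX Y dY" "tdeg C w' = tdeg C w"
    using assms(2,3) unfolding smash_eq_def by auto
qed

lemma smash_iff:
  "Q \<in> smash C X dX rX Y dY \<longleftrightarrow> (\<exists>w\<in>tens C X dX Y dY. Q = smash_q C X dX rX Y dY w)"
  unfolding smash_def smash_q_def quotient_def by blast

lemma smash_q_in_smash:
  "w \<in> tens C X dX Y dY \<Longrightarrow> smash_q C X dX rX Y dY w \<in> smash C X dX rX Y dY"
  unfolding smash_iff by blast

lemma smash_deg_q:
  assumes "action_closed X dX rX" "w \<in> tens C X dX Y dY"
  shows "smash_deg C (smash_q C X dX rX Y dY w) = tdeg C w"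
  unfolding smash_deg_def using smash_eq_tens(2)[OF assms(1) smash_q_some assms(2)] .

lemma smash_some:
  assumes "action_closed X dX rX" "Q \<in> smash C X dX rX Y dY"
  shows "(SOME v. v \<in> Q) \<in> tens C X dX Y dY" "Q = smash_q C X dX rX Y dY (SOME v. v \<in> Q)"
    "tdeg C (SOME v. v \<in> Q) = smash_deg C Q"
proof -
  obtain w where w: "w \<in> tens C X dX Y dY" "Q = smash_q C X dX rX Y dY w"
    using assms(2) smash_iff by blast
  show "(SOME v. v \<in> Q) \<in> tens C X dX Y dY"
    using smash_eq_tens(1)[OF assms(1) smash_q_some w(1)] w(2) by simp
  show "Q = smash_q C X dX rX Y dY (SOME v. v \<in> Q)"
    using smash_q_some[of w] w(2) smash_q_eq_iff by metis
  show "tdeg C (SOME v. v \<in> Q) = smash_deg C Q"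
    unfolding smash_deg_def ..
qed

definition fibre_restrict :: "'m \<Rightarrow> (nat \<Rightarrow> 'c) \<Rightarrow> nat \<Rightarrow> nat \<Rightarrow> 'c" where
  "fibre_restrict \<psi> zs i = (\<lambda>k. if k < crd C (fib C \<psi> i) then zs (fenum \<psi> i k) else undefined)"

lemma tmap_assoc:
  assumes "\<psi> \<in> mor C" "\<phi> \<in> mor C" "tgt C \<phi> = src C \<psi>"
  shows "tmap C id g (assoc C ((x, \<psi>, ys), \<phi>, zs)) =
    (x, cmp C \<psi> \<phi>,
     \<lambda>i. if i < ntgt \<psi> then g (ys i, fibm C \<psi> \<phi> i, fibre_restrict \<psi> zs i) else undefined)"
  unfolding assoc_simp tmap_simp cmp_tgt[OF assms(2,1,3)] fibre_restrict_def
  by (simp add: if_distrib cong: if_cong)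

lemma fibre_family_restrict:
  assumes "\<psi> \<in> mor C" "\<phi> \<in> mor C" "tgt C \<phi> = src C \<psi>" "fibre_family Z dZ \<phi> zs" "i < ntgt \<psi>"
  shows "fibre_family Z dZ (fibm C \<psi> \<phi> i) (fibre_restrict \<psi> zs i)"
proof -
  have "zs (fenum \<psi> i k) \<in> Z \<and> dZ (zs (fenum \<psi> i k)) = fib C (fibm C \<psi> \<phi> i) k"
    if "k < crd C (fib C \<psi> i)" for k
    using fenum_props(1)[OF assms(1,5) that] assms(3,4) fib_fenum[OF assms(1-3,5) that]
    unfolding fibre_family_def by auto
  then show ?thesis
    unfolding fibre_family_def fibre_restrict_def fibm_tgt[OF assms(1-3,5)] by simp
qed

lemma fibre_restrict_fibres:
  assumes "\<psi> \<in> mor C" "\<kappa> \<in> mor C" "tgt C \<kappa> = src C \<psi>" "i < ntgt \<psi>"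
  shows "fibre_restrict \<psi> (fibres \<kappa>) i = fibres (fibm C \<psi> \<kappa> i)"
proof -
  have "fenum \<psi> i k < ntgt \<kappa>" if "k < crd C (fib C \<psi> i)" for k
    using fenum_props(1)[OF assms(1,4) that] assms(3) by simp
  then show ?thesis
    unfolding fibre_restrict_def fibres_def fibm_tgt[OF assms]
    using fib_fenum[OF assms] by auto
qed

text \<open>The action of a fibrewise trivial \<open>\<kappa>\<close> on \<open>X * Y\<close>, i.e. the composite \<open>(1 * r\<^sub>Y) \<alpha>\<close>
  evaluated at \<open>(w, \<kappa>, fibres \<kappa>)\<close>.\<close>
definition tens_act :: "(('b \<times> 'm \<times> (nat \<Rightarrow> 'o)) \<Rightarrow> 'b) \<Rightarrow> ('a \<times> 'm \<times> (nat \<Rightarrow> 'b)) \<Rightarrow> 'm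
    \<Rightarrow> ('a \<times> 'm \<times> (nat \<Rightarrow> 'b))" where
  "tens_act rY w \<kappa> = (case w of (x, \<psi>, ys) \<Rightarrow>
     (x, cmp C \<psi> \<kappa>, \<lambda>i. if i < ntgt \<psi> then ract rY (ys i) (fibm C \<psi> \<kappa> i) else undefined))"

lemma tens_act_simp: "tens_act rY (x, \<psi>, ys) \<kappa> =
     (x, cmp C \<psi> \<kappa>, \<lambda>i. if i < ntgt \<psi> then ract rY (ys i) (fibm C \<psi> \<kappa> i) else undefined)"
  unfolding tens_act_def by simp

lemma tmap_assoc_fibres:
  assumes "\<psi> \<in> mor C" "\<kappa> \<in> mor C" "tgt C \<kappa> = src C \<psi>"
  shows "tmap C id rY (assoc C ((x, \<psi>, ys), \<kappa>, fibres \<kappa>)) = tens_act rY (x, \<psi>, ys) \<kappa>"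
  unfolding tmap_assoc[OF assms] tens_act_simp ract_def
  by (simp add: fibre_restrict_fibres[OF assms] cong: if_cong)

lemma tens_act_tens:
  assumes "action_closed Y dY rY" "(x, \<psi>, ys) \<in> tens C X dX Y dY"
    "\<kappa> \<in> mor C" "fwtriv \<kappa>" "tgt C \<kappa> = src C \<psi>"
  shows "tens_act rY (x, \<psi>, ys) \<kappa> \<in> tens C X dX Y dY" "tdeg C (tens_act rY (x, \<psi>, ys) \<kappa>) = src C \<kappa>"
proof -
  have h: "\<psi> \<in> mor C" "x \<in> X" "dX x = tgt C \<psi>" "fibre_family Y dY \<psi> ys"
    using assms(2) unfolding tens_iff by auto
  have "ract rY (ys i) (fibm C \<psi> \<kappa> i) \<in> Y \<and> dY (ract rY (ys i) (fibm C \<psi> \<kappa> i)) = fib C (cmp C \<psi> \<kappa>) i"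
    if i: "i < ntgt \<psi>" for i
    using action_closedD[OF assms(1) _ fibm_mor[OF h(1) assms(3,5) i]] h(4) i
      fibm_tgt[OF h(1) assms(3,5) i] fwtriv_fibm[OF h(1) assms(3,5,4) i] fibm_src[OF h(1) assms(3,5) i]
    unfolding fibre_family_def by auto
  then have "fibre_family Y dY (cmp C \<psi> \<kappa>)
      (\<lambda>i. if i < ntgt \<psi> then ract rY (ys i) (fibm C \<psi> \<kappa> i) else undefined)"
    unfolding fibre_family_def cmp_tgt[OF assms(3) h(1) assms(5)] by simp
  then show "tens_act rY (x, \<psi>, ys) \<kappa> \<in> tens C X dX Y dY"
    unfolding tens_act_simp tens_iff
    using h cmp_mor[OF assms(3) h(1) assms(5)] cmp_tgt[OF assms(3) h(1) assms(5)] by simp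
  show "tdeg C (tens_act rY (x, \<psi>, ys) \<kappa>) = src C \<kappa>"
    unfolding tens_act_simp tdeg_simp using cmp_src[OF assms(3) h(1) assms(5)] by simp
qed

lemma smash_gen_tens_act:
  assumes "action_closed X dX rX" "action_closed Y dY rY" "(a, b) \<in> smash_gen C X dX rX Y dY"
    "\<kappa> \<in> mor C" "fwtriv \<kappa>" "tgt C \<kappa> = tdeg C a"
  shows "(tens_act rY a \<kappa>, tens_act rY b \<kappa>) \<in> smash_gen C X dX rX Y dY"
proof -
  obtain x \<psi> \<phi> ys where h: "x \<in> X" "\<psi> \<in> mor C" "dX x = tgt C \<psi>" "fwtriv \<psi>" "\<phi> \<in> mor C"
    "tgt C \<phi> = src C \<psi>" "fibre_family Y dY \<phi> ys"
    "a = (ract rX x \<psi>, \<phi>, ys)" "b = (x, cmp C \<psi> \<phi>, pull \<psi> ys)"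
    using assms(3) by (rule smash_genE)
  have k: "tgt C \<kappa> = src C \<phi>" using assms(6) h(8) tdeg_simp by simp
  let ?ys' = "\<lambda>j. if j < ntgt \<phi> then ract rY (ys j) (fibm C \<phi> \<kappa> j) else undefined"
  have "fibre_family Y dY (cmp C \<phi> \<kappa>) ?ys'"
    using tens_act_tens(1)[OF assms(2) smash_gen_tens(1)[OF assms(1,3), unfolded h(8)] assms(4,5) k]
    unfolding tens_act_simp tens_iff by simp
  moreover have "(\<lambda>i. if i < ntgt (cmp C \<psi> \<phi>) then ract rY (pull \<psi> ys i) (fibm C (cmp C \<psi> \<phi>) \<kappa> i)
      else undefined) = pull \<psi> ?ys'"
  proof -
    have "fenum \<psi> i 0 < ntgt \<phi>" "fibm C \<phi> \<kappa> (fenum \<psi> i 0) = fibm C (cmp C \<psi> \<phi>) \<kappa> i"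
      if "i < ntgt \<psi>" for i
      using fwtriv_fenum(1)[OF h(2,4) that] h(6)
        trivial_fibre_transfer(2)[OF h(2,5,6) that fwtrivD[OF h(4) that] assms(4) k] by auto
    then show ?thesis unfolding pull_def cmp_tgt[OF h(5,2,6)] by auto
  qed
  ultimately show ?thesis
    unfolding h(8,9) tens_act_simp cmp_assoc[OF assms(4) h(5,2) k h(6), symmetric]
    using smash_genI[of x X \<psi> dX, OF h(1-4) cmp_mor[OF assms(4) h(5) k]] cmp_tgt[OF assms(4) h(5) k] h(6) by simp
qed

lemma smash_act_q:
  assumes aX: "action_closed X dX rX" and aY: "action_closed Y dY rY" and w: "w \<in> tens C X dX Y dY"
    and \<kappa>: "\<kappa> \<in> mor C" "fwtriv \<kappa>" "tgt C \<kappa> = tdeg C w"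
  shows "smash_act C X dX rX Y dY rY (smash_q C X dX rX Y dY w, \<kappa>, fibres \<kappa>)
       = smash_q C X dX rX Y dY (tens_act rY w \<kappa>)"
proof -
  let ?q = "smash_q C X dX rX Y dY" and ?r = "SOME v. v \<in> smash_q C X dX rX Y dY w"
  let ?P = "\<lambda>v. v \<in> tens C X dX Y dY \<and> tdeg C v = tdeg C w"
  have gen_P: "?P a \<longleftrightarrow> ?P b" if "(a, b) \<in> smash_gen C X dX rX Y dY" for a b
    using smash_gen_tens[OF aX that] by metis
  obtain x \<psi> ys where r: "?r = (x, \<psi>, ys)" by (cases ?r)
  have \<psi>: "\<psi> \<in> mor C" "tgt C \<kappa> = src C \<psi>"
    using smash_eq_tens[OF aX smash_q_some w] \<kappa>(3) unfolding r tens_iff tdeg_simp by auto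
  have "smash_act C X dX rX Y dY rY (?q w, \<kappa>, fibres \<kappa>) = ?q (tmap C id rY (assoc C (?r, \<kappa>, fibres \<kappa>)))"
    unfolding smash_act_def by simp
  also have "\<dots> = ?q (tens_act rY ?r \<kappa>)"
    unfolding r tmap_assoc_fibres[OF \<psi>(1) \<kappa>(1) \<psi>(2)] ..
  also have "\<dots> = ?q (tens_act rY w \<kappa>)"
  proof (rule sym_closure_respects[of w ?r, where P = ?P, symmetric])
    show "(w, ?r) \<in> (smash_gen C X dX rX Y dY \<union> (smash_gen C X dX rX Y dY)\<inverse>)\<^sup>*"
      using smash_q_some unfolding smash_eq_def .
    show "?q (tens_act rY a \<kappa>) = ?q (tens_act rY b \<kappa>)"
      if "(a, b) \<in> smash_gen C X dX rX Y dY" "?P a" for a b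
      using smash_q_gen[OF smash_gen_tens_act[OF aX aY that(1) \<kappa>(1,2)]] that(2) \<kappa>(3) by simp
  qed (use w gen_P in auto)
  finally show ?thesis .
qed

lemma pull_fibre_restrict:
  assumes "\<psi> \<in> mor C" "\<kappa> \<in> mor C" "tgt C \<kappa> = src C \<psi>" "fwtriv \<kappa>" "i < ntgt \<psi>"
  shows "pull (fibm C \<psi> \<kappa> i) (fibre_restrict (cmp C \<psi> \<kappa>) zs i) = fibre_restrict \<psi> (pull \<kappa> zs) i"
proof -
  note \<rho> = fibm_mor[OF assms(1-3,5)] fwtriv_fibm[OF assms(1-5)] fibm_tgt[OF assms(1-3,5)]
    fibm_src[OF assms(1-3,5)]
  have "fenum (fibm C \<psi> \<kappa> i) k 0 < crd C (fib C (cmp C \<psi> \<kappa>) i)" "fenum \<psi> i k < ntgt \<kappa>"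
    if "k < crd C (fib C \<psi> i)" for k
    using fwtriv_fenum(1)[OF \<rho>(1,2)] \<rho>(3,4) that fenum_props(1)[OF assms(1,5) that] assms(3) by auto
  then show ?thesis
    unfolding pull_def fibre_restrict_def \<rho>(3) using fenum_cmp_fibm[OF assms] by (auto simp: fun_eq_iff)
qed

section \<open>Fibrewise trivial factorisations\<close>

text \<open>A factorisation \<open>\<theta> = \<psi> \<phi>\<close> through which the family \<open>\<chi>\<^sub>i : \<theta>\<inverse> i \<rightarrow> x\<^sub>i\<close> factors fibrewise trivially,
  i.e. an object of \<open>\<theta>/(C/e)\<close> with a fibrewise trivial map from its image under \<open>\<theta>/R\<^sub>e\<close> to \<open>\<chi>\<close>.\<close>
definition fwtriv_factorization :: "'m \<Rightarrow> (nat \<Rightarrow> 'm) \<Rightarrow> 'm \<Rightarrow> 'm \<Rightarrow> (nat \<Rightarrow> 'm) \<Rightarrow> bool" where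
  "fwtriv_factorization \<theta> \<chi> \<psi> \<phi> g \<longleftrightarrow>
     \<psi> \<in> mor C \<and> \<phi> \<in> mor C \<and> tgt C \<phi> = src C \<psi> \<and> cmp C \<psi> \<phi> = \<theta> \<and>
     (\<forall>i<ntgt \<theta>. g i \<in> mor C \<and> src C (g i) = fib C \<psi> i \<and> tgt C (g i) = tgt C (\<chi> i) \<and>
        fwtriv (g i) \<and> cmp C (g i) (fibm C \<psi> \<phi> i) = \<chi> i)"

definition universal_factorization :: "'m \<Rightarrow> (nat \<Rightarrow> 'm) \<Rightarrow> 'm \<Rightarrow> 'm \<Rightarrow> (nat \<Rightarrow> 'm) \<Rightarrow> bool" where
  "universal_factorization \<theta> \<chi> \<psi>B \<phi>B \<sigma> \<longleftrightarrow> fwtriv_factorization \<theta> \<chi> \<psi>B \<phi>B \<sigma> \<and>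
     (\<forall>\<psi> \<phi> g. fwtriv_factorization \<theta> \<chi> \<psi> \<phi> g \<longrightarrow>
        (\<exists>\<kappa>. \<kappa> \<in> mor C \<and> src C \<kappa> = src C \<psi> \<and> tgt C \<kappa> = src C \<psi>B \<and>
           cmp C \<psi>B \<kappa> = \<psi> \<and> cmp C \<kappa> \<phi> = \<phi>B \<and> (\<forall>i<ntgt \<theta>. cmp C (\<sigma> i) (fibm C \<psi>B \<kappa> i) = g i)))"

lemma fwtriv_factorizationD:
  assumes "fwtriv_factorization \<theta> \<chi> \<psi> \<phi> g"
  shows "\<psi> \<in> mor C" "\<phi> \<in> mor C" "tgt C \<phi> = src C \<psi>" "cmp C \<psi> \<phi> = \<theta>"
    "tgt C \<psi> = tgt C \<theta>" "src C \<phi> = src C \<theta>"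
    "\<And>i. i < ntgt \<theta> \<Longrightarrow> g i \<in> mor C \<and> src C (g i) = fib C \<psi> i \<and> tgt C (g i) = tgt C (\<chi> i) \<and>
      fwtriv (g i) \<and> cmp C (g i) (fibm C \<psi> \<phi> i) = \<chi> i"
  using assms cmp_tgt[of \<phi> \<psi>] cmp_src[of \<phi> \<psi>] unfolding fwtriv_factorization_def by auto

lemma fwtriv_factorization_cong:
  "(\<And>i. i < ntgt \<theta> \<Longrightarrow> \<chi> i = \<chi>' i) \<Longrightarrow> fwtriv_factorization \<theta> \<chi> = fwtriv_factorization \<theta> \<chi>'"
  unfolding fwtriv_factorization_def by (intro ext) auto

lemma universal_factorization_cong:
  assumes "\<And>i. i < ntgt \<theta> \<Longrightarrow> \<chi> i = \<chi>' i"
  shows "universal_factorization \<theta> \<chi> = universal_factorization \<theta> \<chi>'"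
  unfolding universal_factorization_def using fwtriv_factorization_cong[OF assms] by simp

lemma universal_factorization_exists:
  assumes "weak_right_adjoint_hyp C" "\<theta> \<in> mor C" "\<And>i. i < ntgt \<theta> \<Longrightarrow> \<chi> i \<in> mor C \<and> src C (\<chi> i) = fib C \<theta> i"
  shows "\<exists>\<psi>B \<phi>B \<sigma>. universal_factorization \<theta> \<chi> \<psi>B \<phi>B \<sigma>"
proof -
  let ?x = "\<lambda>i. tgt C (\<chi> i)"
  have pre: "?x i \<in> ob C \<and> \<chi> i \<in> hom C (fib C \<theta> i) (?x i)" if "i < ntgt \<theta>" for i
    using assms(3)[OF that] tgt_ob unfolding hom_def by blast
  show ?thesis
    apply (insert bspec[OF assms(1)[unfolded weak_right_adjoint_hyp_def] assms(2)])
    apply (elim exE)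
    subgoal premises S for S \<sigma>
    proof -
      note B = S[rule_format, OF pre, unfolded Let_def]
      have "universal_factorization \<theta> \<chi> (snd (S ?x \<chi>)) (fst (S ?x \<chi>)) (\<sigma> ?x \<chi>)"
        unfolding universal_factorization_def
      proof (intro conjI allI impI)
        show "fwtriv_factorization \<theta> \<chi> (snd (S ?x \<chi>)) (fst (S ?x \<chi>)) (\<sigma> ?x \<chi>)"
          using B unfolding fwtriv_factorization_def hom_def by auto
      next
        fix \<psi> \<phi> g assume "fwtriv_factorization \<theta> \<chi> \<psi> \<phi> g"
        note f = fwtriv_factorizationD[OF this]
        have "\<forall>i<ntgt \<theta>. g i \<in> hom C (fib C \<psi> i) (?x i) \<and> cmp C (g i) (fibm C \<psi> \<phi> i) = \<chi> i"
          using f(7) unfolding hom_def by auto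
        then show "\<exists>\<kappa>. \<kappa> \<in> mor C \<and> src C \<kappa> = src C \<psi> \<and> tgt C \<kappa> = src C (snd (S ?x \<chi>)) \<and>
            cmp C (snd (S ?x \<chi>)) \<kappa> = \<psi> \<and> cmp C \<kappa> \<phi> = fst (S ?x \<chi>) \<and>
            (\<forall>i<ntgt \<theta>. cmp C (\<sigma> ?x \<chi> i) (fibm C (snd (S ?x \<chi>)) \<kappa> i) = g i)"
          using B f(1-6) unfolding hom_def by blast
      qed
      then show ?thesis by blast
    qed
    done
qed

text \<open>Each fibre \<open>(\<kappa>\<^sup>\<psi>\<^sup>B)\<^sub>i\<close> is cancelled from the fibrewise trivial \<open>g\<^sub>i = \<sigma>\<^sub>i (\<kappa>\<^sup>\<psi>\<^sup>B)\<^sub>i\<close>.\<close>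
lemma fwtriv_comparison:
  assumes "fwtriv_factorization \<theta> \<chi> \<psi>B \<phi>B \<sigma>" "fwtriv_factorization \<theta> \<chi> \<psi> \<phi> g"
    and "\<kappa> \<in> mor C" "tgt C \<kappa> = src C \<psi>B"
    and "\<And>i. i < ntgt \<theta> \<Longrightarrow> cmp C (\<sigma> i) (fibm C \<psi>B \<kappa> i) = g i"
  shows "fwtriv \<kappa>"
proof (rule fwtriv_of_fibm[of \<psi>B])
  note B = fwtriv_factorizationD[OF assms(1)] and f = fwtriv_factorizationD[OF assms(2)]
  show "\<psi>B \<in> mor C" "\<kappa> \<in> mor C" "tgt C \<kappa> = src C \<psi>B" using B(1) assms(3,4) by simp_all
  fix i assume iB: "i < ntgt \<psi>B"
  then have i: "i < ntgt \<theta>" using B(5) by simp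
  show "fwtriv (fibm C \<psi>B \<kappa> i)"
    using fwtriv_cancel[of "\<sigma> i" "fibm C \<psi>B \<kappa> i"] B(7)[OF i] f(7)[OF i] assms(5)[OF i]
      fibm_mor[OF B(1) assms(3,4) iB] fibm_tgt[OF B(1) assms(3,4) iB] by simp
qed

text \<open>The \<open>Z\<close>-part of an element of \<open>(X * Y) * Z\<close> built from a factorisation \<open>\<theta> = \<psi> \<phi>\<close>:
  the \<open>j\<close>-th fibre of \<open>\<phi>\<close> sits at rank \<open>frank \<psi> i j\<close> in the fibre \<open>i = |\<psi>| j\<close>, which \<open>g\<^sub>i\<close> moves
  to a position of \<open>zs\<^sub>i\<close>.\<close>
definition reindex :: "(nat \<Rightarrow> nat \<Rightarrow> 'c) \<Rightarrow> 'm \<Rightarrow> (nat \<Rightarrow> 'm) \<Rightarrow> 'm \<Rightarrow> nat \<Rightarrow> 'c" where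
  "reindex zs \<psi> g \<phi> = (\<lambda>j. if j < ntgt \<phi> then
      zs (crdm C \<psi> j) (crdm C (g (crdm C \<psi> j)) (frank \<psi> (crdm C \<psi> j) j)) else undefined)"

lemma pull_reindex:
  assumes B: "fwtriv_factorization \<theta> \<chi> \<psi>B \<phi>B \<sigma>"
    and \<kappa>: "\<kappa> \<in> mor C" "tgt C \<kappa> = src C \<psi>B" "fwtriv \<kappa>"
    and \<phi>: "tgt C \<phi> = src C \<kappa>" "cmp C \<kappa> \<phi> = \<phi>B"
    and g: "\<And>i. i < ntgt \<theta> \<Longrightarrow> cmp C (\<sigma> i) (fibm C \<psi>B \<kappa> i) = g i"
  shows "pull \<kappa> (reindex zs (cmp C \<psi>B \<kappa>) g \<phi>) = reindex zs \<psi>B \<sigma> \<phi>B"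
proof
  note b = fwtriv_factorizationD[OF B]
  let ?\<psi> = "cmp C \<psi>B \<kappa>"
  have \<psi>: "?\<psi> \<in> mor C" "src C ?\<psi> = src C \<kappa>" using cmp_mor[OF \<kappa>(1) b(1) \<kappa>(2)] cmp_src[OF \<kappa>(1) b(1) \<kappa>(2)] .
  fix j
  show "pull \<kappa> (reindex zs ?\<psi> g \<phi>) j = reindex zs \<psi>B \<sigma> \<phi>B j"
  proof (cases "j < ntgt \<kappa>")
    case True
    define l where "l = fenum \<kappa> j 0"
    have l: "l < nsrc \<kappa>" "crdm C \<kappa> l = j" using fwtriv_fenum[OF \<kappa>(1,3) True] unfolding l_def by auto
    have jB: "j < nsrc \<psi>B" using True \<kappa>(2) by simp
    define i where "i = crdm C \<psi>B j"
    have i\<psi>: "crdm C ?\<psi> l = i" using crdm_cmp[OF \<kappa>(1) b(1) \<kappa>(2) l(1)] l(2) unfolding i_def by simp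
    have iB: "i < ntgt \<psi>B" using crdm_less[OF b(1) jB] unfolding i_def .
    then have i\<theta>: "i < ntgt \<theta>" using b(5) by simp
    define m where "m = frank ?\<psi> i l"
    have m: "m < crd C (fib C ?\<psi> i)" "fenum ?\<psi> i m = l"
      using frank_props[OF \<psi>(1)] l(1) \<psi>(2) i\<psi> unfolding m_def by auto
    have "crdm C (fibm C \<psi>B \<kappa> i) m = frank \<psi>B i j"
      using crdm_fibm[OF b(1) \<kappa>(1,2) iB m(1)] m(2) l(2) unfolding i_def by simp
    moreover have "m < nsrc (fibm C \<psi>B \<kappa> i)" "fibm C \<psi>B \<kappa> i \<in> mor C"
      "tgt C (fibm C \<psi>B \<kappa> i) = src C (\<sigma> i)"
      using m(1) fibm_src[OF b(1) \<kappa>(1,2) iB] fibm_mor[OF b(1) \<kappa>(1,2) iB]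
        fibm_tgt[OF b(1) \<kappa>(1,2) iB] b(7)[OF i\<theta>] by auto
    ultimately have "crdm C (g i) m = crdm C (\<sigma> i) (frank \<psi>B i j)"
      using crdm_cmp[of "fibm C \<psi>B \<kappa> i" "\<sigma> i" m] b(7)[OF i\<theta>] g[OF i\<theta>] by simp
    moreover have "l < ntgt \<phi>" using l(1) \<phi>(1) by simp
    moreover have "j < ntgt \<phi>B" using True \<kappa>(2) b(3) by simp
    ultimately show ?thesis
      using True i\<psi> unfolding pull_def reindex_def l_def[symmetric] m_def i_def by simp
  next
    case False
    then show ?thesis using \<kappa>(2) b(3) unfolding pull_def reindex_def by simp
  qed
qed

lemma fwtriv_factorization_postcompose:
  assumes f: "fwtriv_factorization \<theta> \<chi> \<psi> \<phi> \<sigma>"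
    and \<rho>: "\<And>i. i < ntgt \<theta> \<Longrightarrow> \<rho> i \<in> mor C \<and> tgt C (\<chi> i) = src C (\<rho> i) \<and> fwtriv (\<rho> i)"
  shows "fwtriv_factorization \<theta> (\<lambda>i. cmp C (\<rho> i) (\<chi> i)) \<psi> \<phi> (\<lambda>i. cmp C (\<rho> i) (\<sigma> i))"
  unfolding fwtriv_factorization_def
proof (intro conjI allI impI)
  note b = fwtriv_factorizationD[OF f]
  show "\<psi> \<in> mor C" "\<phi> \<in> mor C" "tgt C \<phi> = src C \<psi>" "cmp C \<psi> \<phi> = \<theta>" using b(1-4) .
  fix i assume i: "i < ntgt \<theta>"
  note s = b(7)[OF i] and r = \<rho>[OF i]
  have t: "tgt C (\<sigma> i) = src C (\<rho> i)" using s r by simp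
  have i\<psi>: "i < ntgt \<psi>" using i b(5) by simp
  note fm = fibm_mor[OF b(1-3) i\<psi>] fibm_tgt[OF b(1-3) i\<psi>]
  have ts: "tgt C (fibm C \<psi> \<phi> i) = src C (\<sigma> i)" using fm(2) s by simp
  have "\<chi> i \<in> mor C" using cmp_mor[OF fm(1) _ ts] s by simp
  from cmp_assoc[OF fm(1) _ _ ts t] s r
  show "cmp C (cmp C (\<rho> i) (\<sigma> i)) (fibm C \<psi> \<phi> i) = cmp C (\<rho> i) (\<chi> i)" by simp
  show "cmp C (\<rho> i) (\<sigma> i) \<in> mor C" "src C (cmp C (\<rho> i) (\<sigma> i)) = fib C \<psi> i"
    "tgt C (cmp C (\<rho> i) (\<sigma> i)) = tgt C (cmp C (\<rho> i) (\<chi> i))" "fwtriv (cmp C (\<rho> i) (\<sigma> i))"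
    using cmp_mor[OF _ _ t] cmp_src[OF _ _ t] cmp_tgt[OF _ _ t] fwtriv_cmp[OF _ _ t] s r
      cmp_tgt[OF \<open>\<chi> i \<in> mor C\<close>, of "\<rho> i"] by auto
qed

lemma fwtriv_factorization_pull:
  assumes f: "fwtriv_factorization \<phi> \<chi> \<psi>B \<phi>B \<sigma>"
    and \<psi>: "\<psi> \<in> mor C" "tgt C \<phi> = src C \<psi>" "fwtriv \<psi>"
    and \<chi>': "\<And>i. i < ntgt \<psi> \<Longrightarrow> \<chi>' i = \<chi> (fenum \<psi> i 0)"
    and \<sigma>': "\<And>i. i < ntgt \<psi> \<Longrightarrow> \<sigma>' i = \<sigma> (fenum \<psi> i 0)"
  shows "fwtriv_factorization (cmp C \<psi> \<phi>) \<chi>' (cmp C \<psi> \<psi>B) \<phi>B \<sigma>'"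
  unfolding fwtriv_factorization_def
proof (intro conjI allI impI)
  note b = fwtriv_factorizationD[OF f]
  have tB: "tgt C \<psi>B = src C \<psi>" using b(5) \<psi>(2) by simp
  show "cmp C \<psi> \<psi>B \<in> mor C" "\<phi>B \<in> mor C" "tgt C \<phi>B = src C (cmp C \<psi> \<psi>B)"
    "cmp C (cmp C \<psi> \<psi>B) \<phi>B = cmp C \<psi> \<phi>"
    using cmp_mor[OF b(1) \<psi>(1) tB] b(2,3) cmp_src[OF b(1) \<psi>(1) tB] cmp_assoc[OF b(2,1) \<psi>(1) b(3) tB] b(4)
    by simp_all
  fix i assume "i < ntgt (cmp C \<psi> \<phi>)"
  moreover have "\<phi> \<in> mor C" using cmp_mor[OF b(2,1,3)] b(4) by simp
  ultimately have i: "i < ntgt \<psi>" using cmp_tgt[OF _ \<psi>(1,2)] by simp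
  note T = trivial_fibre_transfer[OF \<psi>(1) b(1) tB i fwtrivD[OF \<psi>(3) i]]
  have e: "fenum \<psi> i 0 < ntgt \<phi>" using fwtriv_fenum(1)[OF \<psi>(1,3) i] \<psi>(2) by simp
  note s = b(7)[OF e]
  show "\<sigma>' i \<in> mor C" "src C (\<sigma>' i) = fib C (cmp C \<psi> \<psi>B) i"
    "tgt C (\<sigma>' i) = tgt C (\<chi>' i)" "fwtriv (\<sigma>' i)"
    "cmp C (\<sigma>' i) (fibm C (cmp C \<psi> \<psi>B) \<phi>B i) = \<chi>' i"
    using s T(1) T(2)[OF b(2,3)] \<chi>'[OF i] \<sigma>'[OF i] by simp_all
qed

lemma reindex_pull:
  assumes \<psi>B: "\<psi>B \<in> mor C" and \<psi>: "\<psi> \<in> mor C" "tgt C \<psi>B = src C \<psi>" "fwtriv \<psi>"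
    and \<phi>B: "tgt C \<phi>B = src C \<psi>B"
    and zs': "\<And>i. i < ntgt \<psi> \<Longrightarrow> zs' i = zs (fenum \<psi> i 0)"
    and \<sigma>': "\<And>i. i < ntgt \<psi> \<Longrightarrow> \<sigma>' i = \<sigma> (fenum \<psi> i 0)"
  shows "reindex zs' (cmp C \<psi> \<psi>B) \<sigma>' \<phi>B = reindex zs \<psi>B \<sigma> \<phi>B"
proof
  fix j
  show "reindex zs' (cmp C \<psi> \<psi>B) \<sigma>' \<phi>B j = reindex zs \<psi>B \<sigma> \<phi>B j"
  proof (cases "j < ntgt \<phi>B")
    case True
    have jB: "j < nsrc \<psi>B" using True \<phi>B by simp
    define i where "i = crdm C (cmp C \<psi> \<psi>B) j"
    have bj: "crdm C \<psi>B j < nsrc \<psi>" using crdm_less[OF \<psi>B jB] \<psi>(2) by simp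
    have ii: "crdm C \<psi> (crdm C \<psi>B j) = i" using crdm_cmp[OF \<psi>B \<psi>(1,2) jB] unfolding i_def by simp
    have i: "i < ntgt \<psi>" using crdm_less[OF \<psi>(1) bj] ii by simp
    note T = trivial_fibre_preimage[OF \<psi>(1) i fwtrivD[OF \<psi>(3) i]]
      trivial_fibre_transfer(4)[OF \<psi>(1) \<psi>B \<psi>(2) i fwtrivD[OF \<psi>(3) i] jB]
    have "crdm C \<psi>B j = fenum \<psi> i 0" using T(3)[OF bj ii] .
    then show ?thesis unfolding reindex_def using True i T(4) zs'[OF i] \<sigma>'[OF i] unfolding i_def by simp
  next
    case False
    then show ?thesis unfolding reindex_def by simp
  qed
qed

lemma reindex_postcompose:
  assumes f: "fwtriv_factorization \<theta> \<chi> \<psi> \<phi> \<sigma>"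
    and \<rho>: "\<And>i. i < ntgt \<theta> \<Longrightarrow> \<rho> i \<in> mor C \<and> tgt C (\<sigma> i) = src C (\<rho> i) \<and> fwtriv (\<rho> i)"
    and zs: "\<And>i. i < ntgt \<theta> \<Longrightarrow> zs i = pull (\<rho> i) (zs' i)"
  shows "reindex zs \<psi> (\<lambda>i. cmp C (\<rho> i) (\<sigma> i)) \<phi> = reindex zs' \<psi> \<sigma> \<phi>"
proof
  note b = fwtriv_factorizationD[OF f]
  fix j
  show "reindex zs \<psi> (\<lambda>i. cmp C (\<rho> i) (\<sigma> i)) \<phi> j = reindex zs' \<psi> \<sigma> \<phi> j"
  proof (cases "j < ntgt \<phi>")
    case True
    have j: "j < nsrc \<psi>" using True b(3) by simp
    define i where "i = crdm C \<psi> j"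
    have i: "i < ntgt \<theta>" using crdm_less[OF b(1) j] b(5) unfolding i_def by simp
    note s = b(7)[OF i] and r = \<rho>[OF i]
    define m where "m = frank \<psi> i j"
    have m: "m < nsrc (\<sigma> i)" using frank_props(1)[OF b(1) j] s unfolding i_def m_def by simp
    have a: "crdm C (\<sigma> i) m < nsrc (\<rho> i)" using crdm_less[OF _ m] s r by simp
    have "pull (\<rho> i) (zs' i) (crdm C (\<rho> i) (crdm C (\<sigma> i) m)) = zs' i (crdm C (\<sigma> i) m)"
      unfolding pull_def using crdm_less[OF _ a] fwtriv_fenum_crdm[OF _ _ a] r by simp
    then show ?thesis
      unfolding reindex_def using True crdm_cmp[OF _ _ _ m] s r zs[OF i]
      unfolding i_def[symmetric] m_def[symmetric] by simp
  next
    case False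
    then show ?thesis unfolding reindex_def by simp
  qed
qed

lemma reindex_ide:
  assumes \<psi>: "\<psi> \<in> mor C" and \<phi>: "tgt C \<phi> = src C \<psi>" and zs: "fibre_family Z dZ \<phi> zs"
  shows "reindex (fibre_restrict \<psi> zs) \<psi> (\<lambda>i. ide C (fib C \<psi> i)) \<phi> = zs"
proof
  fix j
  show "reindex (fibre_restrict \<psi> zs) \<psi> (\<lambda>i. ide C (fib C \<psi> i)) \<phi> j = zs j"
  proof (cases "j < ntgt \<phi>")
    case True
    then have j: "j < nsrc \<psi>" using \<phi> by simp
    note i = crdm_less[OF \<psi> j] and m = frank_props[OF \<psi> j]
    show ?thesis
      unfolding reindex_def fibre_restrict_def using True m crdm_ide[OF fib_ob[OF \<psi> i] m(1)] by simp
  next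
    case False
    then show ?thesis using zs unfolding reindex_def fibre_family_def by simp
  qed
qed

lemma pull_ide:
  assumes "c \<in> ob C" "tgt C \<phi> = c" "fibre_family Z dZ \<phi> z"
  shows "pull (ide C c) z = z"
proof
  fix k
  show "pull (ide C c) z k = z k"
  proof (cases "k < crd C c")
    case True
    then have "k < nsrc (ide C c)" using ide_src[OF assms(1)] by simp
    from fwtriv_fenum_crdm[OF ide_mor[OF assms(1)] fwtriv_ide[OF assms(1)] this]
    show ?thesis unfolding pull_def using True ide_tgt[OF assms(1)] crdm_ide[OF assms(1) True] by simp
  next
    case False
    then show ?thesis
      unfolding pull_def using ide_tgt[OF assms(1)] assms(2,3) unfolding fibre_family_def by simp
  qed
qed

end

section \<open>The associativity map\<close>

locale three_collections = operadic C for C :: "('o, 'm) opcat" +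
  fixes X :: "'a set" and dX :: "'a \<Rightarrow> 'o" and rX :: "('a \<times> 'm \<times> (nat \<Rightarrow> 'o)) \<Rightarrow> 'a"
    and Y :: "'b set" and dY :: "'b \<Rightarrow> 'o" and rY :: "('b \<times> 'm \<times> (nat \<Rightarrow> 'o)) \<Rightarrow> 'b"
    and Z :: "'c set" and dZ :: "'c \<Rightarrow> 'o"
  assumes module_X: "rmodule C X dX rX" and module_Y: "rmodule C Y dY rY"
begin

abbreviation "qXY \<equiv> smash_q C X dX rX Y dY"
abbreviation "qYZ \<equiv> smash_q C Y dY rY Z dZ"
abbreviation "XY \<equiv> smash C X dX rX Y dY"
abbreviation "YZ \<equiv> smash C Y dY rY Z dZ"
abbreviation "rXY \<equiv> smash_act C X dX rX Y dY rY"
abbreviation "qXY_Z \<equiv> smash_q C XY (smash_deg C) rXY Z dZ"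
abbreviation "qX_YZ \<equiv> smash_q C X dX rX YZ (smash_deg C)"
abbreviation "XY_Z \<equiv> tens C XY (smash_deg C) Z dZ"
abbreviation "X_YZ \<equiv> tens C X dX YZ (smash_deg C)"

lemma action_closed_X: "action_closed X dX rX"
  using rmodule_action_closed[OF module_X] .
lemma action_closed_Y: "action_closed Y dY rY"
  using rmodule_action_closed[OF module_Y] .

definition alpha_q :: "'a \<times> 'm \<times> (nat \<Rightarrow> 'b) \<Rightarrow> 'm \<Rightarrow> (nat \<Rightarrow> 'c)
    \<Rightarrow> ('a \<times> 'm \<times> (nat \<Rightarrow> ('b \<times> 'm \<times> (nat \<Rightarrow> 'c)) set)) set" where
  "alpha_q w \<phi> zs = qX_YZ (tmap C id qYZ (assoc C (w, \<phi>, zs)))"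

definition alpha_cls :: "('a \<times> 'm \<times> (nat \<Rightarrow> 'b)) set \<times> 'm \<times> (nat \<Rightarrow> 'c)
    \<Rightarrow> ('a \<times> 'm \<times> (nat \<Rightarrow> ('b \<times> 'm \<times> (nat \<Rightarrow> 'c)) set)) set" where
  "alpha_cls t = (case t of (Q, \<phi>, zs) \<Rightarrow> alpha_q (SOME w. w \<in> Q) \<phi> zs)"

lemma tmap_assoc_tens:
  assumes w: "(x, \<psi>, ys) \<in> tens C X dX Y dY" and \<phi>: "\<phi> \<in> mor C" "tgt C \<phi> = src C \<psi>"
    and zs: "fibre_family Z dZ \<phi> zs"
  shows "\<And>i. i < ntgt \<psi> \<Longrightarrow> (ys i, fibm C \<psi> \<phi> i, fibre_restrict \<psi> zs i) \<in> tens C Y dY Z dZ"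
    "\<And>i. i < ntgt \<psi> \<Longrightarrow> tdeg C (ys i, fibm C \<psi> \<phi> i, fibre_restrict \<psi> zs i) = fib C (cmp C \<psi> \<phi>) i"
    "tmap C id qYZ (assoc C ((x, \<psi>, ys), \<phi>, zs)) \<in> X_YZ"
proof -
  have h: "\<psi> \<in> mor C" "x \<in> X" "dX x = tgt C \<psi>" "fibre_family Y dY \<psi> ys"
    using w unfolding tens_iff by auto
  show m: "(ys i, fibm C \<psi> \<phi> i, fibre_restrict \<psi> zs i) \<in> tens C Y dY Z dZ" if i: "i < ntgt \<psi>" for i
    using fibm_mor[OF h(1) \<phi> i] fibm_tgt[OF h(1) \<phi> i] h(4) i fibre_family_restrict[OF h(1) \<phi> zs i]
    unfolding tens_iff fibre_family_def by auto
  show d: "tdeg C (ys i, fibm C \<psi> \<phi> i, fibre_restrict \<psi> zs i) = fib C (cmp C \<psi> \<phi>) i"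
    if "i < ntgt \<psi>" for i
    unfolding tdeg_simp using fibm_src[OF h(1) \<phi> that] .
  have "fibre_family YZ (smash_deg C) (cmp C \<psi> \<phi>)
     (\<lambda>i. if i < ntgt \<psi> then qYZ (ys i, fibm C \<psi> \<phi> i, fibre_restrict \<psi> zs i) else undefined)"
    unfolding fibre_family_def cmp_tgt[OF \<phi>(1) h(1) \<phi>(2)]
    using smash_q_in_smash[OF m] smash_deg_q[OF action_closed_Y m] d by auto
  then show "tmap C id qYZ (assoc C ((x, \<psi>, ys), \<phi>, zs)) \<in> X_YZ"
    unfolding tmap_assoc[OF h(1) \<phi>] tens_iff
    using h cmp_mor[OF \<phi>(1) h(1) \<phi>(2)] cmp_tgt[OF \<phi>(1) h(1) \<phi>(2)] by simp
qed

lemma alpha_q_smash_gen: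
  assumes g: "(a, b) \<in> smash_gen C X dX rX Y dY" and \<phi>: "\<phi> \<in> mor C" "tgt C \<phi> = tdeg C a"
    and zs: "fibre_family Z dZ \<phi> zs"
  shows "alpha_q a \<phi> zs = alpha_q b \<phi> zs"
proof -
  obtain x \<psi> \<phi>1 ys where h: "x \<in> X" "\<psi> \<in> mor C" "dX x = tgt C \<psi>" "fwtriv \<psi>" "\<phi>1 \<in> mor C"
    "tgt C \<phi>1 = src C \<psi>" "fibre_family Y dY \<phi>1 ys"
    "a = (ract rX x \<psi>, \<phi>1, ys)" "b = (x, cmp C \<psi> \<phi>1, pull \<psi> ys)"
    using g by (rule smash_genE)
  have t: "tgt C \<phi> = src C \<phi>1" using \<phi>(2) h(8) tdeg_simp by simp
  note c = cmp_mor[OF \<phi>(1) h(5) t] cmp_tgt[OF \<phi>(1) h(5) t]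
  let ?ws = "\<lambda>i. if i < ntgt \<phi>1 then qYZ (ys i, fibm C \<phi>1 \<phi> i, fibre_restrict \<phi>1 zs i) else undefined"
  have ws: "fibre_family YZ (smash_deg C) (cmp C \<phi>1 \<phi>) ?ws"
    using tmap_assoc_tens(3)[OF smash_gen_tens(1)[OF action_closed_X g, unfolded h(8)] \<phi>(1) t zs]
    unfolding tmap_assoc[OF h(5) \<phi>(1) t] tens_iff by simp
  have "(\<lambda>i. if i < ntgt (cmp C \<psi> \<phi>1) then qYZ (pull \<psi> ys i, fibm C (cmp C \<psi> \<phi>1) \<phi> i,
        fibre_restrict (cmp C \<psi> \<phi>1) zs i) else undefined) = pull \<psi> ?ws"
  proof -
    have "fenum \<psi> i 0 < ntgt \<phi>1" "fibm C \<phi>1 \<phi> (fenum \<psi> i 0) = fibm C (cmp C \<psi> \<phi>1) \<phi> i"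
      "fibre_restrict \<phi>1 zs (fenum \<psi> i 0) = fibre_restrict (cmp C \<psi> \<phi>1) zs i"
      if i: "i < ntgt \<psi>" for i
      using fwtriv_fenum(1)[OF h(2,4) i] h(6)
        trivial_fibre_transfer(1,2,3)[OF h(2,5,6) i fwtrivD[OF h(4) i]] \<phi>(1) t
      unfolding fibre_restrict_def by auto
    then show ?thesis unfolding pull_def cmp_tgt[OF h(5,2,6)] by (intro ext) simp
  qed
  then have "tmap C id qYZ (assoc C (b, \<phi>, zs)) = (x, cmp C \<psi> (cmp C \<phi>1 \<phi>), pull \<psi> ?ws)"
    unfolding h(9) tmap_assoc[OF cmp_mor[OF h(5,2,6)] \<phi>(1) t[folded cmp_src[OF h(5,2,6)]]]
    using cmp_assoc[OF \<phi>(1) h(5,2) t h(6)] by simp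
  moreover have "tmap C id qYZ (assoc C (a, \<phi>, zs)) = (ract rX x \<psi>, cmp C \<phi>1 \<phi>, ?ws)"
    unfolding h(8) tmap_assoc[OF h(5) \<phi>(1) t] ..
  ultimately show ?thesis
    unfolding alpha_q_def using smash_q_gen[OF smash_genI[of x X \<psi> dX, OF h(1-4) c(1) _ ws]] c(2) h(6) by simp
qed

lemma alpha_q_smash_eq:
  assumes "(w, w') \<in> smash_eq C X dX rX Y dY" "w \<in> tens C X dX Y dY" "\<phi> \<in> mor C"
    "tgt C \<phi> = tdeg C w" "fibre_family Z dZ \<phi> zs"
  shows "alpha_q w \<phi> zs = alpha_q w' \<phi> zs"
proof (rule sym_closure_respects[where P = "\<lambda>v. v \<in> tens C X dX Y dY \<and> tdeg C v = tdeg C w"])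
  show "(w, w') \<in> (smash_gen C X dX rX Y dY \<union> (smash_gen C X dX rX Y dY)\<inverse>)\<^sup>*"
    using assms(1) unfolding smash_eq_def .
qed (use assms smash_gen_tens[OF action_closed_X] alpha_q_smash_gen in metis)+

lemma alpha_q_some:
  assumes "w \<in> tens C X dX Y dY" "\<phi> \<in> mor C" "tgt C \<phi> = tdeg C w" "fibre_family Z dZ \<phi> zs"
  shows "alpha_q (SOME v. v \<in> qXY w) \<phi> zs = alpha_q w \<phi> zs"
  using alpha_q_smash_eq[OF smash_q_some assms] by simp

lemma alpha_q_tens_act:
  assumes w: "(x, \<psi>, ys) \<in> tens C X dX Y dY"
    and \<kappa>: "\<kappa> \<in> mor C" "fwtriv \<kappa>" "tgt C \<kappa> = src C \<psi>"
    and \<phi>: "\<phi> \<in> mor C" "tgt C \<phi> = src C \<kappa>" and zs: "fibre_family Z dZ \<phi> zs"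
  shows "alpha_q (tens_act rY (x, \<psi>, ys) \<kappa>) \<phi> zs = alpha_q (x, \<psi>, ys) (cmp C \<kappa> \<phi>) (pull \<kappa> zs)"
proof -
  have h: "\<psi> \<in> mor C" "fibre_family Y dY \<psi> ys" using w unfolding tens_iff by auto
  note \<psi>\<kappa> = cmp_mor[OF \<kappa>(1) h(1) \<kappa>(3)] cmp_src[OF \<kappa>(1) h(1) \<kappa>(3)] cmp_tgt[OF \<kappa>(1) h(1) \<kappa>(3)]
  note \<kappa>\<phi> = cmp_mor[OF \<phi>(1) \<kappa>(1) \<phi>(2)] cmp_tgt[OF \<phi>(1) \<kappa>(1) \<phi>(2)]
  have component:
    "qYZ (ract rY (ys i) (fibm C \<psi> \<kappa> i), fibm C (cmp C \<psi> \<kappa>) \<phi> i, fibre_restrict (cmp C \<psi> \<kappa>) zs i) =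
     qYZ (ys i, fibm C \<psi> (cmp C \<kappa> \<phi>) i, fibre_restrict \<psi> (pull \<kappa> zs) i)" if i: "i < ntgt \<psi>" for i
  proof -
    have \<phi>': "tgt C \<phi> = src C (cmp C \<psi> \<kappa>)" "i < ntgt (cmp C \<psi> \<kappa>)" using \<psi>\<kappa> \<phi>(2) i by simp_all
    note \<rho> = fibm_mor[OF h(1) \<kappa>(1,3) i] fwtriv_fibm[OF h(1) \<kappa>(1,3,2) i]
      fibm_tgt[OF h(1) \<kappa>(1,3) i] fibm_src[OF h(1) \<kappa>(1,3) i]
    have "ys i \<in> Y" "dY (ys i) = tgt C (fibm C \<psi> \<kappa> i)" using h(2) i \<rho>(3) unfolding fibre_family_def by auto
    from smash_q_gen[OF smash_genI[of "ys i" Y "fibm C \<psi> \<kappa> i" dY, OF this(1) \<rho>(1) this(2) \<rho>(2)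
          fibm_mor[OF \<psi>\<kappa>(1) \<phi>(1) \<phi>'] _ fibre_family_restrict[OF \<psi>\<kappa>(1) \<phi>(1) \<phi>'(1) zs \<phi>'(2)]]]
    show ?thesis
      using fibm_tgt[OF \<psi>\<kappa>(1) \<phi>(1) \<phi>'] \<rho>(4) fibm_cmp[OF h(1) \<kappa>(1) \<phi>(1) \<phi>(2) \<kappa>(3) i]
        pull_fibre_restrict[OF h(1) \<kappa>(1,3,2) i, of zs] by simp
  qed
  show ?thesis
    unfolding alpha_q_def tens_act_simp tmap_assoc[OF \<psi>\<kappa>(1) \<phi>(1) \<phi>(2)[folded \<psi>\<kappa>(2)]]
      tmap_assoc[OF h(1) \<kappa>\<phi>(1) \<kappa>\<phi>(2)[unfolded \<kappa>(3)]] cmp_assoc[OF \<phi>(1) \<kappa>(1) h(1) \<phi>(2) \<kappa>(3)] \<psi>\<kappa>(3)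
    using component by (simp cong: if_cong)
qed

lemma alpha_cls_smash_gen:
  assumes "(a, b) \<in> smash_gen C XY (smash_deg C) rXY Z dZ"
  shows "alpha_cls a = alpha_cls b"
proof -
  obtain Q \<kappa> \<phi> zs where h: "Q \<in> XY" "\<kappa> \<in> mor C" "smash_deg C Q = tgt C \<kappa>" "fwtriv \<kappa>" "\<phi> \<in> mor C"
    "tgt C \<phi> = src C \<kappa>" "fibre_family Z dZ \<phi> zs"
    "a = (ract rXY Q \<kappa>, \<phi>, zs)" "b = (Q, cmp C \<kappa> \<phi>, pull \<kappa> zs)"
    using assms by (rule smash_genE)
  note r = smash_some[OF action_closed_X h(1)]
  obtain x \<psi> ys where w: "(SOME v. v \<in> Q) = (x, \<psi>, ys)" by (cases "SOME v. v \<in> Q")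
  have w0: "(x, \<psi>, ys) \<in> tens C X dX Y dY" "tgt C \<kappa> = src C \<psi>"
    using r(1,3) h(3) w by (simp_all add: tdeg_simp)
  note act = tens_act_tens[OF action_closed_Y w0(1) h(2,4) w0(2)]
  have "ract rXY Q \<kappa> = qXY (tens_act rY (x, \<psi>, ys) \<kappa>)"
    unfolding ract_def using smash_act_q[OF action_closed_X action_closed_Y w0(1) h(2,4)] w0(2) r(2) w
    by (simp add: tdeg_simp)
  then have "alpha_cls a = alpha_q (SOME v. v \<in> qXY (tens_act rY (x, \<psi>, ys) \<kappa>)) \<phi> zs"
    unfolding alpha_cls_def h(8) by simp
  also have "\<dots> = alpha_q (tens_act rY (x, \<psi>, ys) \<kappa>) \<phi> zs"
    using alpha_q_some[OF act(1) h(5) _ h(7)] act(2) h(6) by simp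
  also have "\<dots> = alpha_q (x, \<psi>, ys) (cmp C \<kappa> \<phi>) (pull \<kappa> zs)"
    using alpha_q_tens_act[OF w0(1) h(2,4) w0(2) h(5,6,7)] .
  also have "\<dots> = alpha_cls b"
    unfolding alpha_cls_def h(9) using w by simp
  finally show ?thesis .
qed

lemma smash_assoc_q:
  assumes "t \<in> XY_Z"
  shows "smash_assoc C X dX rX Y dY rY Z dZ (qXY_Z t) = alpha_cls t"
proof -
  have "smash_assoc C X dX rX Y dY rY Z dZ (qXY_Z t) = alpha_cls (SOME v. v \<in> qXY_Z t)"
    unfolding smash_assoc_def alpha_cls_def alpha_q_def by (simp add: case_prod_beta)
  also have "\<dots> = alpha_cls t"
    using sym_closure_respects[where P = "\<lambda>_. True", OF smash_q_some[unfolded smash_eq_def]]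
      alpha_cls_smash_gen by metis
  finally show ?thesis .
qed

lemma alpha_cls_in_smash:
  assumes "(Q, \<phi>, zs) \<in> XY_Z"
  shows "alpha_cls (Q, \<phi>, zs) \<in> smash C X dX rX YZ (smash_deg C)"
proof -
  have h: "\<phi> \<in> mor C" "Q \<in> XY" "smash_deg C Q = tgt C \<phi>" "fibre_family Z dZ \<phi> zs"
    using assms unfolding tens_iff by auto
  note r = smash_some[OF action_closed_X h(2)]
  obtain x \<psi> ys where w: "(SOME v. v \<in> Q) = (x, \<psi>, ys)" by (cases "SOME v. v \<in> Q")
  have w0: "(x, \<psi>, ys) \<in> tens C X dX Y dY" "tgt C \<phi> = src C \<psi>"
    using r(1,3) h(3) w by (simp_all add: tdeg_simp)
  from smash_q_in_smash[OF tmap_assoc_tens(3)[OF w0(1) h(1) w0(2) h(4)]] show ?thesis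
    unfolding alpha_cls_def alpha_q_def using w by simp
qed

end

section \<open>The inverse of the associativity map\<close>

locale operadic_weak_adjoint = operadic C for C :: "('o, 'm) opcat" +
  assumes weak_adjoint: "weak_right_adjoint_hyp C"
begin

definition adjoint_factorization :: "'m \<Rightarrow> (nat \<Rightarrow> 'm) \<Rightarrow> 'm \<times> 'm \<times> (nat \<Rightarrow> 'm)" where
  "adjoint_factorization \<theta> \<chi> =
     (SOME p. universal_factorization \<theta> \<chi> (fst p) (fst (snd p)) (snd (snd p)))"

lemma adjoint_factorization:
  assumes "\<theta> \<in> mor C" "\<And>i. i < ntgt \<theta> \<Longrightarrow> \<chi> i \<in> mor C \<and> src C (\<chi> i) = fib C \<theta> i"
    and "adjoint_factorization \<theta> \<chi> = (\<psi>B, \<phi>B, \<sigma>)"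
  shows "universal_factorization \<theta> \<chi> \<psi>B \<phi>B \<sigma>"
proof -
  have "\<exists>p. universal_factorization \<theta> \<chi> (fst p) (fst (snd p)) (snd (snd p))"
    using universal_factorization_exists[OF weak_adjoint assms(1,2)] by auto
  from someI_ex[OF this] show ?thesis
    using assms(3) unfolding adjoint_factorization_def by simp
qed

lemma adjoint_factorization_cong:
  "(\<And>i. i < ntgt \<theta> \<Longrightarrow> \<chi> i = \<chi>' i) \<Longrightarrow> adjoint_factorization \<theta> \<chi> = adjoint_factorization \<theta> \<chi>'"
  unfolding adjoint_factorization_def using universal_factorization_cong by metis

end

locale hopf_collections =
  three_collections C X dX rX Y dY rY Z dZ + operadic_weak_adjoint C
  for C :: "('o, 'm) opcat" and X :: "'a set" and dX rX and Y :: "'b set" and dY rY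
    and Z :: "'c set" and dZ
begin

abbreviation rep_y :: "(nat \<Rightarrow> 'b \<times> 'm \<times> (nat \<Rightarrow> 'c)) \<Rightarrow> nat \<Rightarrow> 'b" where
  "rep_y vs i \<equiv> fst (vs i)"
abbreviation rep_mor :: "(nat \<Rightarrow> 'b \<times> 'm \<times> (nat \<Rightarrow> 'c)) \<Rightarrow> nat \<Rightarrow> 'm" where
  "rep_mor vs i \<equiv> fst (snd (vs i))"
abbreviation rep_z :: "(nat \<Rightarrow> 'b \<times> 'm \<times> (nat \<Rightarrow> 'c)) \<Rightarrow> nat \<Rightarrow> nat \<Rightarrow> 'c" where
  "rep_z vs i \<equiv> snd (snd (vs i))"

definition rep_family :: "'a \<Rightarrow> 'm \<Rightarrow> (nat \<Rightarrow> 'b \<times> 'm \<times> (nat \<Rightarrow> 'c)) \<Rightarrow> bool" where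
  "rep_family x \<theta> vs \<longleftrightarrow> x \<in> X \<and> \<theta> \<in> mor C \<and> dX x = tgt C \<theta> \<and>
     (\<forall>i<ntgt \<theta>. vs i \<in> tens C Y dY Z dZ \<and> tdeg C (vs i) = fib C \<theta> i)"

lemma rep_familyD:
  assumes "rep_family x \<theta> vs" "i < ntgt \<theta>"
  shows "rep_y vs i \<in> Y" "rep_mor vs i \<in> mor C" "dY (rep_y vs i) = tgt C (rep_mor vs i)"
    "fibre_family Z dZ (rep_mor vs i) (rep_z vs i)" "src C (rep_mor vs i) = fib C \<theta> i"
proof -
  have "vs i \<in> tens C Y dY Z dZ" "tdeg C (vs i) = fib C \<theta> i"
    using assms unfolding rep_family_def by auto
  moreover obtain y c z where "vs i = (y, c, z)" by (cases "vs i")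
  ultimately show "rep_y vs i \<in> Y" "rep_mor vs i \<in> mor C" "dY (rep_y vs i) = tgt C (rep_mor vs i)"
    "fibre_family Z dZ (rep_mor vs i) (rep_z vs i)" "src C (rep_mor vs i) = fib C \<theta> i"
    by (auto simp: tens_iff tdeg_simp)
qed

definition act_ys :: "(nat \<Rightarrow> 'b \<times> 'm \<times> (nat \<Rightarrow> 'c)) \<Rightarrow> 'm \<Rightarrow> (nat \<Rightarrow> 'm) \<Rightarrow> nat \<Rightarrow> 'b" where
  "act_ys vs \<psi> g = (\<lambda>i. if i < ntgt \<psi> then ract rY (rep_y vs i) (g i) else undefined)"

text \<open>The element of \<open>(X \<and> Y) \<and> Z\<close> determined by a fibrewise trivial factorisation of \<open>\<theta>\<close>;
  the inverse of the associativity map sends the class of \<open>(x, \<theta>, vs)\<close> to it.\<close>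
definition lift :: "'a \<Rightarrow> (nat \<Rightarrow> 'b \<times> 'm \<times> (nat \<Rightarrow> 'c)) \<Rightarrow> 'm \<Rightarrow> 'm \<Rightarrow> (nat \<Rightarrow> 'm)
    \<Rightarrow> (('a \<times> 'm \<times> (nat \<Rightarrow> 'b)) set \<times> 'm \<times> (nat \<Rightarrow> 'c)) set" where
  "lift x vs \<psi> \<phi> g = qXY_Z (qXY (x, \<psi>, act_ys vs \<psi> g), \<phi>, reindex (rep_z vs) \<psi> g \<phi>)"

lemma lift_tens:
  assumes v: "rep_family x \<theta> vs" and f: "fwtriv_factorization \<theta> (rep_mor vs) \<psi> \<phi> g"
  shows "(x, \<psi>, act_ys vs \<psi> g) \<in> tens C X dX Y dY"
    "fibre_family Z dZ \<phi> (reindex (rep_z vs) \<psi> g \<phi>)"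
    "(qXY (x, \<psi>, act_ys vs \<psi> g), \<phi>, reindex (rep_z vs) \<psi> g \<phi>) \<in> XY_Z"
proof -
  note b = fwtriv_factorizationD[OF f]
  have "act_ys vs \<psi> g i \<in> Y \<and> dY (act_ys vs \<psi> g i) = fib C \<psi> i" if i: "i < ntgt \<psi>" for i
    using action_closedD[OF action_closed_Y rep_familyD(1)[OF v]] b(5,7) rep_familyD(3)[OF v] i
    unfolding act_ys_def by auto
  then show w: "(x, \<psi>, act_ys vs \<psi> g) \<in> tens C X dX Y dY"
    using v b unfolding tens_iff fibre_family_def rep_family_def act_ys_def by auto
  have "reindex (rep_z vs) \<psi> g \<phi> j \<in> Z \<and> dZ (reindex (rep_z vs) \<psi> g \<phi> j) = fib C \<phi> j"
    if j: "j < ntgt \<phi>" for j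
  proof -
    have j': "j < nsrc \<psi>" using j b(3) by simp
    define i where "i = crdm C \<psi> j"
    have i: "i < ntgt \<psi>" "i < ntgt \<theta>" using crdm_less[OF b(1) j'] b(5) unfolding i_def by auto
    note gi = b(7)[OF i(2)] and vi = rep_familyD[OF v i(2)]
    define m where "m = frank \<psi> i j"
    have m: "m < nsrc (g i)" "m < crd C (fib C \<psi> i)" using frank_props(1)[OF b(1) j'] gi
      unfolding m_def i_def by auto
    define a where "a = crdm C (g i) m"
    have a: "a < ntgt (g i)" using crdm_less[OF _ m(1)] gi unfolding a_def by simp
    note fm = fibm_mor[OF b(1-3) i(1)] fibm_tgt[OF b(1-3) i(1)]
    have "fib C (rep_mor vs i) a = fib C (fibm C \<psi> \<phi> i) m"
      using trivial_fibre_transfer(1)[OF _ fm(1) _ a fwtrivD[OF _ a]] fwtriv_fenum_crdm[OF _ _ m(1)] gi fm(2)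
      unfolding a_def by simp
    also have "\<dots> = fib C \<phi> j"
      using fib_fenum[OF b(1-3) i(1) m(2)] frank_props(2)[OF b(1) j'] unfolding m_def i_def by simp
    finally show ?thesis
      using vi(4) a gi vi(3) j unfolding reindex_def fibre_family_def a_def m_def i_def by auto
  qed
  then show z: "fibre_family Z dZ \<phi> (reindex (rep_z vs) \<psi> g \<phi>)"
    unfolding fibre_family_def reindex_def by simp
  show "(qXY (x, \<psi>, act_ys vs \<psi> g), \<phi>, reindex (rep_z vs) \<psi> g \<phi>) \<in> XY_Z"
    using smash_q_in_smash[OF w] smash_deg_q[OF action_closed_X w] z b(2,3)
    unfolding tens_iff by (simp add: tdeg_simp)
qed

lemma tens_act_act_ys:
  assumes v: "rep_family x \<theta> vs" and B: "fwtriv_factorization \<theta> (rep_mor vs) \<psi>B \<phi>B \<sigma>"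
    and \<kappa>: "\<kappa> \<in> mor C" "tgt C \<kappa> = src C \<psi>B" "fwtriv \<kappa>"
    and g: "\<And>i. i < ntgt \<theta> \<Longrightarrow> cmp C (\<sigma> i) (fibm C \<psi>B \<kappa> i) = g i"
  shows "tens_act rY (x, \<psi>B, act_ys vs \<psi>B \<sigma>) \<kappa> = (x, cmp C \<psi>B \<kappa>, act_ys vs (cmp C \<psi>B \<kappa>) g)"
proof -
  note b = fwtriv_factorizationD[OF B]
  have "ract rY (ract rY (rep_y vs i) (\<sigma> i)) (fibm C \<psi>B \<kappa> i) = ract rY (rep_y vs i) (g i)"
    if i: "i < ntgt \<psi>B" for i
    using ract_ract[OF module_Y rep_familyD(1)[OF v]] b(5,7) rep_familyD(3)[OF v]
      fibm_mor[OF b(1) \<kappa>(1,2) i] fibm_tgt[OF b(1) \<kappa>(1,2) i] fwtriv_fibm[OF b(1) \<kappa>(1,2,3) i] g i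
    by simp
  then show ?thesis
    unfolding tens_act_simp act_ys_def cmp_tgt[OF \<kappa>(1) b(1) \<kappa>(2)] by (simp cong: if_cong)
qed

definition inv_rep :: "'a \<Rightarrow> 'm \<Rightarrow> (nat \<Rightarrow> 'b \<times> 'm \<times> (nat \<Rightarrow> 'c))
    \<Rightarrow> (('a \<times> 'm \<times> (nat \<Rightarrow> 'b)) set \<times> 'm \<times> (nat \<Rightarrow> 'c)) set" where
  "inv_rep x \<theta> vs = (case adjoint_factorization \<theta> (rep_mor vs) of (\<psi>B, \<phi>B, \<sigma>) \<Rightarrow> lift x vs \<psi>B \<phi>B \<sigma>)"

lemma universal_rep_factorization:
  assumes "rep_family x \<theta> vs"
  obtains \<psi>B \<phi>B \<sigma> where "adjoint_factorization \<theta> (rep_mor vs) = (\<psi>B, \<phi>B, \<sigma>)"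
    "universal_factorization \<theta> (rep_mor vs) \<psi>B \<phi>B \<sigma>"
proof -
  obtain \<psi>B \<phi>B \<sigma> where e: "adjoint_factorization \<theta> (rep_mor vs) = (\<psi>B, \<phi>B, \<sigma>)"
    by (metis prod_cases3)
  have "\<theta> \<in> mor C" using assms unfolding rep_family_def by blast
  then show thesis
    using that[OF e] adjoint_factorization[OF _ _ e] rep_familyD(2,5)[OF assms] by blast
qed

text \<open>The key step: any two fibrewise trivial factorisations give the same class, because
  the comparison \<open>\<kappa>\<close> with the weakly terminal one is fibrewise trivial and hence relates them
  by a generator of \<open>(X \<and> Y) \<and> Z\<close>.\<close>
lemma inv_rep_eq_lift:
  assumes v: "rep_family x \<theta> vs" and f: "fwtriv_factorization \<theta> (rep_mor vs) \<psi> \<phi> g"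
  shows "inv_rep x \<theta> vs = lift x vs \<psi> \<phi> g"
proof -
  obtain \<psi>B \<phi>B \<sigma> where B: "adjoint_factorization \<theta> (rep_mor vs) = (\<psi>B, \<phi>B, \<sigma>)"
    "universal_factorization \<theta> (rep_mor vs) \<psi>B \<phi>B \<sigma>"
    using universal_rep_factorization[OF v] .
  note fB = B(2)[unfolded universal_factorization_def, THEN conjunct1]
  note b = fwtriv_factorizationD[OF f] and bB = fwtriv_factorizationD[OF fB]
  obtain \<kappa> where k: "\<kappa> \<in> mor C" "src C \<kappa> = src C \<psi>" "tgt C \<kappa> = src C \<psi>B" "cmp C \<psi>B \<kappa> = \<psi>"
    "cmp C \<kappa> \<phi> = \<phi>B" "\<And>i. i < ntgt \<theta> \<Longrightarrow> cmp C (\<sigma> i) (fibm C \<psi>B \<kappa> i) = g i"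
    using B(2) f unfolding universal_factorization_def by blast
  have ftk: "fwtriv \<kappa>" using fwtriv_comparison[OF fB f k(1,3,6)] .
  let ?wB = "(x, \<psi>B, act_ys vs \<psi>B \<sigma>)"
  have wB: "?wB \<in> tens C X dX Y dY" using lift_tens(1)[OF v fB] .
  let ?QB = "qXY ?wB"
  have QB: "?QB \<in> XY" "smash_deg C ?QB = tgt C \<kappa>"
    using smash_q_in_smash[OF wB] smash_deg_q[OF action_closed_X wB] k(3) by (auto simp: tdeg_simp)
  have "ract rXY ?QB \<kappa> = qXY (x, \<psi>, act_ys vs \<psi> g)"
    unfolding ract_def using smash_act_q[OF action_closed_X action_closed_Y wB k(1) ftk] k(3)
      tens_act_act_ys[OF v fB k(1,3) ftk k(6)] k(4) by (simp add: tdeg_simp)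
  moreover have "tgt C \<phi> = src C \<kappa>" using k(2) b(3) by simp
  note gen = smash_genI[of ?QB XY \<kappa> "smash_deg C", OF QB(1) k(1) QB(2) ftk b(2) this lift_tens(2)[OF v f]]
  ultimately have "lift x vs \<psi> \<phi> g = qXY_Z (?QB, cmp C \<kappa> \<phi>, pull \<kappa> (reindex (rep_z vs) \<psi> g \<phi>))"
    unfolding lift_def using smash_q_gen by metis
  also have "\<dots> = lift x vs \<psi>B \<phi>B \<sigma>"
    unfolding lift_def k(5) using pull_reindex[OF fB k(1,3) ftk _ k(5) k(6), of "rep_z vs"] k(2,4) b(3) by simp
  finally show ?thesis unfolding inv_rep_def B(1) by simp
qed

lemma lift_cong:
  assumes f: "fwtriv_factorization \<theta> \<chi> \<psi> \<phi> g" and eq: "\<And>i. i < ntgt \<theta> \<Longrightarrow> vs i = vs' i"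
  shows "lift x vs \<psi> \<phi> g = lift x vs' \<psi> \<phi> g"
proof -
  note b = fwtriv_factorizationD[OF f]
  have "act_ys vs \<psi> g = act_ys vs' \<psi> g"
    unfolding act_ys_def using eq b(5) by (intro ext) simp
  moreover have "crdm C \<psi> j < ntgt \<theta>" if "j < ntgt \<phi>" for j
    using crdm_less[OF b(1), of j] that b(3,5) by simp
  then have "reindex (rep_z vs) \<psi> g \<phi> = reindex (rep_z vs') \<psi> g \<phi>"
    unfolding reindex_def using eq by (intro ext) simp
  ultimately show ?thesis unfolding lift_def by simp
qed

lemma inv_rep_cong:
  assumes v: "rep_family x \<theta> vs" and eq: "\<And>i. i < ntgt \<theta> \<Longrightarrow> vs i = vs' i"
  shows "inv_rep x \<theta> vs = inv_rep x \<theta> vs'"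
proof -
  obtain \<psi>B \<phi>B \<sigma> where B: "adjoint_factorization \<theta> (rep_mor vs) = (\<psi>B, \<phi>B, \<sigma>)"
    "universal_factorization \<theta> (rep_mor vs) \<psi>B \<phi>B \<sigma>"
    using universal_rep_factorization[OF v] .
  have "adjoint_factorization \<theta> (rep_mor vs') = (\<psi>B, \<phi>B, \<sigma>)"
    using adjoint_factorization_cong[of \<theta> "rep_mor vs" "rep_mor vs'"] eq B(1) by simp
  then show ?thesis
    unfolding inv_rep_def B(1) using lift_cong[OF B(2)[unfolded universal_factorization_def,
        THEN conjunct1] eq] by simp
qed

text \<open>\<open>yz_step \<rho> v v'\<close>: \<open>v\<close> and \<open>v'\<close> are the two sides of a generating relation of \<open>Y \<and> Z\<close>,
  acting by \<open>\<rho>\<close>; with \<open>\<rho>\<close> an identity this also covers \<open>v = v'\<close>.\<close>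
definition yz_step :: "'m \<Rightarrow> 'b \<times> 'm \<times> (nat \<Rightarrow> 'c) \<Rightarrow> 'b \<times> 'm \<times> (nat \<Rightarrow> 'c) \<Rightarrow> bool" where
  "yz_step \<rho> v v' \<longleftrightarrow> (\<exists>y \<phi> z. v = (y, cmp C \<rho> \<phi>, pull \<rho> z) \<and> v' = (ract rY y \<rho>, \<phi>, z) \<and>
     y \<in> Y \<and> \<rho> \<in> mor C \<and> dY y = tgt C \<rho> \<and> fwtriv \<rho> \<and> \<phi> \<in> mor C \<and> tgt C \<phi> = src C \<rho> \<and>
     fibre_family Z dZ \<phi> z)"

lemma yz_step_refl:
  assumes "v \<in> tens C Y dY Z dZ"
  shows "yz_step (ide C (tgt C (fst (snd v)))) v v"
proof -
  obtain y \<chi> z where v: "v = (y, \<chi>, z)" by (cases v)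
  have h: "\<chi> \<in> mor C" "y \<in> Y" "dY y = tgt C \<chi>" "fibre_family Z dZ \<chi> z"
    using assms unfolding v tens_iff by auto
  have c: "tgt C \<chi> \<in> ob C" using tgt_ob[OF h(1)] .
  show ?thesis
    unfolding yz_step_def v
    using cmp_ide_left[OF h(1)] pull_ide[OF c refl h(4)] ract_ide[OF module_Y h(2)] h
      ide_mor[OF c] ide_tgt[OF c] ide_src[OF c] fwtriv_ide[OF c] by fastforce
qed

lemma yz_step_smash_gen: "(v', v) \<in> smash_gen C Y dY rY Z dZ \<Longrightarrow> \<exists>\<rho>. yz_step \<rho> v v'"
  unfolding yz_step_def by (erule smash_genE) blast

lemma inv_rep_yz_steps:
  assumes v: "rep_family x \<theta> vs" and v': "rep_family x \<theta> vs'"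
    and r: "\<And>i. i < ntgt \<theta> \<Longrightarrow> yz_step (\<rho> i) (vs i) (vs' i)"
  shows "inv_rep x \<theta> vs = inv_rep x \<theta> vs'"
proof -
  obtain \<psi> \<phi> \<sigma> where B: "adjoint_factorization \<theta> (rep_mor vs') = (\<psi>, \<phi>, \<sigma>)"
    "universal_factorization \<theta> (rep_mor vs') \<psi> \<phi> \<sigma>"
    using universal_rep_factorization[OF v'] .
  note fB = B(2)[unfolded universal_factorization_def, THEN conjunct1]
  note b = fwtriv_factorizationD[OF fB]
  have step: "vs i = (rep_y vs i, cmp C (\<rho> i) (rep_mor vs' i), pull (\<rho> i) (rep_z vs' i))"
    "rep_y vs' i = ract rY (rep_y vs i) (\<rho> i)" "rep_y vs i \<in> Y" "\<rho> i \<in> mor C"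
    "dY (rep_y vs i) = tgt C (\<rho> i)" "fwtriv (\<rho> i)" "rep_mor vs' i \<in> mor C"
    "tgt C (rep_mor vs' i) = src C (\<rho> i)" if "i < ntgt \<theta>" for i
    using r[OF that] unfolding yz_step_def by auto
  let ?g = "\<lambda>i. cmp C (\<rho> i) (\<sigma> i)"
  have "fwtriv_factorization \<theta> (rep_mor vs) \<psi> \<phi> ?g"
  proof -
    have "fwtriv_factorization \<theta> (\<lambda>i. cmp C (\<rho> i) (rep_mor vs' i)) \<psi> \<phi> ?g"
      by (rule fwtriv_factorization_postcompose[OF fB]) (use step in simp)
    moreover have "fwtriv_factorization \<theta> (\<lambda>i. cmp C (\<rho> i) (rep_mor vs' i)) =
        fwtriv_factorization \<theta> (rep_mor vs)"
      unfolding fwtriv_factorization_def using step(1) by (intro ext) (metis fst_conv snd_conv)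
    ultimately show ?thesis by simp
  qed
  then have "inv_rep x \<theta> vs = lift x vs \<psi> \<phi> ?g" using inv_rep_eq_lift[OF v] by simp
  also have "\<dots> = lift x vs' \<psi> \<phi> \<sigma>"
  proof -
    have "ract rY (rep_y vs i) (?g i) = ract rY (rep_y vs' i) (\<sigma> i)" if i: "i < ntgt \<theta>" for i
      using ract_ract[OF module_Y step(3,5,4,6)[OF i]] b(7)[OF i] step(2,8)[OF i] by simp
    then have "act_ys vs \<psi> ?g = act_ys vs' \<psi> \<sigma>"
      unfolding act_ys_def using b(5) by (intro ext) simp
    moreover have "reindex (rep_z vs) \<psi> ?g \<phi> = reindex (rep_z vs') \<psi> \<sigma> \<phi>"
      by (rule reindex_postcompose[OF fB]) (use step in \<open>simp_all add: b(7)\<close>, metis snd_conv)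
    ultimately show ?thesis unfolding lift_def by simp
  qed
  also have "\<dots> = inv_rep x \<theta> vs'" unfolding inv_rep_def B(1) by simp
  finally show ?thesis .
qed

lemma inv_rep_smash_gen_component:
  assumes v: "rep_family x \<theta> vs" and i: "i < ntgt \<theta>"
    and g: "(vs i, b) \<in> smash_gen C Y dY rY Z dZ \<union> (smash_gen C Y dY rY Z dZ)\<inverse>"
  shows "inv_rep x \<theta> vs = inv_rep x \<theta> (vs(i := b))"
proof -
  have "vs i \<in> tens C Y dY Z dZ" using v i unfolding rep_family_def by simp
  then have "b \<in> tens C Y dY Z dZ \<and> tdeg C b = tdeg C (vs i)"
    using g smash_gen_tens[OF action_closed_Y, of "vs i" b] smash_gen_tens[OF action_closed_Y, of b "vs i"]
    by auto
  then have v': "rep_family x \<theta> (vs(i := b))" using v i unfolding rep_family_def by auto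
  have refl: "\<exists>\<rho>. yz_step \<rho> (vs j) (vs j)" if "j < ntgt \<theta>" for j
    using yz_step_refl v that unfolding rep_family_def by blast
  from g show ?thesis
  proof
    assume "(vs i, b) \<in> smash_gen C Y dY rY Z dZ"
    then have "\<exists>\<rho>. yz_step \<rho> b (vs i)" by (rule yz_step_smash_gen)
    then have "\<forall>j. \<exists>\<rho>. j < ntgt \<theta> \<longrightarrow> yz_step \<rho> ((vs(i := b)) j) (vs j)" using refl by auto
    then obtain \<rho> where "\<And>j. j < ntgt \<theta> \<Longrightarrow> yz_step (\<rho> j) ((vs(i := b)) j) (vs j)" by metis
    from inv_rep_yz_steps[OF v' v this] show ?thesis by (rule sym)
  next
    assume "(vs i, b) \<in> (smash_gen C Y dY rY Z dZ)\<inverse>"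
    then have "\<exists>\<rho>. yz_step \<rho> (vs i) b" using yz_step_smash_gen by simp
    then have "\<forall>j. \<exists>\<rho>. j < ntgt \<theta> \<longrightarrow> yz_step \<rho> (vs j) ((vs(i := b)) j)" using refl by auto
    then obtain \<rho> where "\<And>j. j < ntgt \<theta> \<Longrightarrow> yz_step (\<rho> j) (vs j) ((vs(i := b)) j)" by metis
    from inv_rep_yz_steps[OF v v' this] show ?thesis .
  qed
qed

lemma inv_rep_smash_eq:
  assumes v: "rep_family x \<theta> vs" and e: "\<And>i. i < ntgt \<theta> \<Longrightarrow> (vs i, vs' i) \<in> smash_eq C Y dY rY Z dZ"
  shows "inv_rep x \<theta> vs = inv_rep x \<theta> vs'"
proof -
  let ?R = "smash_gen C Y dY rY Z dZ \<union> (smash_gen C Y dY rY Z dZ)\<inverse>"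
  have fg: "\<forall>i<ntgt \<theta>. (vs i, vs' i) \<in> ?R\<^sup>*" using e unfolding smash_eq_def by blast
  have rep: "rep_family x \<theta> h" if "\<forall>j<ntgt \<theta>. (vs j, h j) \<in> ?R\<^sup>*" for h
  proof -
    have "h j \<in> tens C Y dY Z dZ \<and> tdeg C (h j) = tdeg C (vs j)" if "j < ntgt \<theta>" for j
      using smash_eq_tens[OF action_closed_Y] \<open>\<forall>j<ntgt \<theta>. (vs j, h j) \<in> ?R\<^sup>*\<close> v that
      unfolding rep_family_def smash_eq_def by blast
    then show ?thesis using v unfolding rep_family_def by auto
  qed
  have "inv_rep x \<theta> vs = inv_rep x \<theta> (\<lambda>i. if i < ntgt \<theta> then vs' i else vs i)"
    by (rule rtrancl_pointwise_invariant[OF fg]) (use inv_rep_smash_gen_component rep in blast)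
  also have "\<dots> = inv_rep x \<theta> vs'"
    by (rule inv_rep_cong) (use rep fg in auto)
  finally show ?thesis .
qed

definition inv_cls :: "'a \<times> 'm \<times> (nat \<Rightarrow> ('b \<times> 'm \<times> (nat \<Rightarrow> 'c)) set)
    \<Rightarrow> (('a \<times> 'm \<times> (nat \<Rightarrow> 'b)) set \<times> 'm \<times> (nat \<Rightarrow> 'c)) set" where
  "inv_cls u = (case u of (x, \<theta>, ws) \<Rightarrow> inv_rep x \<theta> (\<lambda>i. SOME v. v \<in> ws i))"

lemma rep_family_some:
  assumes "(x, \<theta>, ws) \<in> X_YZ"
  shows "rep_family x \<theta> (\<lambda>i. SOME v. v \<in> ws i)"
proof -
  have h: "\<theta> \<in> mor C" "x \<in> X" "dX x = tgt C \<theta>" "fibre_family YZ (smash_deg C) \<theta> ws"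
    using assms unfolding tens_iff by auto
  have "(SOME v. v \<in> ws i) \<in> tens C Y dY Z dZ \<and> tdeg C (SOME v. v \<in> ws i) = fib C \<theta> i"
    if "i < ntgt \<theta>" for i
  proof -
    have "ws i \<in> YZ" "smash_deg C (ws i) = fib C \<theta> i" using h(4) that unfolding fibre_family_def by auto
    then show ?thesis using smash_some(1,3)[OF action_closed_Y, of "ws i"] by simp
  qed
  then show ?thesis unfolding rep_family_def using h by auto
qed

lemma pull_act_ys:
  assumes B: "fwtriv_factorization \<phi> \<chi> \<psi>B \<phi>B \<sigma>" and \<psi>: "\<psi> \<in> mor C" "tgt C \<phi> = src C \<psi>" "fwtriv \<psi>"
    and vs': "\<And>i. i < ntgt \<psi> \<Longrightarrow> vs' i = vs (fenum \<psi> i 0)"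
  shows "pull \<psi> (act_ys vs \<psi>B \<sigma>) = act_ys vs' (cmp C \<psi> \<psi>B) (pull \<psi> \<sigma>)"
proof -
  note b = fwtriv_factorizationD[OF B]
  have tB: "tgt C \<psi>B = src C \<psi>" using b(5) \<psi>(2) by simp
  have "fenum \<psi> i 0 < ntgt \<psi>B" if "i < ntgt \<psi>" for i
    using fwtriv_fenum(1)[OF \<psi>(1,3) that] tB by simp
  then show ?thesis
    unfolding pull_def act_ys_def cmp_tgt[OF b(1) \<psi>(1) tB] using vs' by (intro ext) simp
qed

lemma inv_cls_smash_gen:
  assumes "(u1, u2) \<in> smash_gen C X dX rX YZ (smash_deg C)"
  shows "inv_cls u1 = inv_cls u2"
proof -
  obtain x \<psi> \<phi> ws where h: "x \<in> X" "\<psi> \<in> mor C" "dX x = tgt C \<psi>" "fwtriv \<psi>" "\<phi> \<in> mor C"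
    "tgt C \<phi> = src C \<psi>" "fibre_family YZ (smash_deg C) \<phi> ws"
    "u1 = (ract rX x \<psi>, \<phi>, ws)" "u2 = (x, cmp C \<psi> \<phi>, pull \<psi> ws)"
    using assms by (rule smash_genE)
  let ?vs1 = "\<lambda>i. SOME v. v \<in> ws i" and ?vs2 = "\<lambda>i. SOME v. v \<in> pull \<psi> ws i"
  have v1: "rep_family (ract rX x \<psi>) \<phi> ?vs1"
    using rep_family_some smash_gen_tens(1)[OF action_closed_X assms] h(8) by simp
  have v2: "rep_family x (cmp C \<psi> \<phi>) ?vs2"
    using rep_family_some smash_gen_tens(2)[OF action_closed_X assms] h(9) by simp
  have vs2: "?vs2 i = ?vs1 (fenum \<psi> i 0)" if "i < ntgt \<psi>" for i
    using that unfolding pull_def by simp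
  obtain \<psi>B \<phi>B \<sigma> where B: "adjoint_factorization \<phi> (rep_mor ?vs1) = (\<psi>B, \<phi>B, \<sigma>)"
    "universal_factorization \<phi> (rep_mor ?vs1) \<psi>B \<phi>B \<sigma>"
    using universal_rep_factorization[OF v1] .
  note fB = B(2)[unfolded universal_factorization_def, THEN conjunct1]
  note b = fwtriv_factorizationD[OF fB]
  have tB: "tgt C \<psi>B = src C \<psi>" using b(5) h(6) by simp
  have "fwtriv_factorization (cmp C \<psi> \<phi>) (rep_mor ?vs2) (cmp C \<psi> \<psi>B) \<phi>B (pull \<psi> \<sigma>)"
    by (rule fwtriv_factorization_pull[OF fB h(2,6,4)]) (simp_all add: vs2 pull_def)
  then have "inv_cls u2 = lift x ?vs2 (cmp C \<psi> \<psi>B) \<phi>B (pull \<psi> \<sigma>)"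
    unfolding inv_cls_def h(9) using inv_rep_eq_lift[OF v2] by simp
  also have "\<dots> = lift (ract rX x \<psi>) ?vs1 \<psi>B \<phi>B \<sigma>"
  proof -
    have "fibre_family Y dY \<psi>B (act_ys ?vs1 \<psi>B \<sigma>)"
      using lift_tens(1)[OF v1 fB] unfolding tens_iff by simp
    then have "qXY (x, cmp C \<psi> \<psi>B, pull \<psi> (act_ys ?vs1 \<psi>B \<sigma>)) =
        qXY (ract rX x \<psi>, \<psi>B, act_ys ?vs1 \<psi>B \<sigma>)"
      by (rule smash_q_gen[OF smash_genI[of x X \<psi> dX, OF h(1-4) b(1) tB], symmetric])
    moreover have "act_ys ?vs2 (cmp C \<psi> \<psi>B) (pull \<psi> \<sigma>) = pull \<psi> (act_ys ?vs1 \<psi>B \<sigma>)"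
      using pull_act_ys[OF fB h(2,6,4), of ?vs2 ?vs1, OF vs2] by simp
    moreover have "reindex (rep_z ?vs2) (cmp C \<psi> \<psi>B) (pull \<psi> \<sigma>) \<phi>B = reindex (rep_z ?vs1) \<psi>B \<sigma> \<phi>B"
      by (rule reindex_pull[OF b(1) h(2) tB h(4) b(3)]) (simp_all add: vs2 pull_def)
    ultimately show ?thesis unfolding lift_def by simp
  qed
  also have "\<dots> = inv_cls u1"
    unfolding inv_cls_def h(8) inv_rep_def using B(1) by simp
  finally show ?thesis by simp
qed

lemma inv_cls_smash_eq:
  assumes "(u, u') \<in> smash_eq C X dX rX YZ (smash_deg C)"
  shows "inv_cls u = inv_cls u'"
  by (rule sym_closure_respects[where P = "\<lambda>_. True", OF assms[unfolded smash_eq_def]])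
    (simp_all add: inv_cls_smash_gen)

lemma inv_rep_assoc:
  assumes w: "(x, \<psi>, ys) \<in> tens C X dX Y dY" and \<phi>: "\<phi> \<in> mor C" "tgt C \<phi> = src C \<psi>"
    and zs: "fibre_family Z dZ \<phi> zs"
  shows "inv_rep x (cmp C \<psi> \<phi>) (\<lambda>i. (ys i, fibm C \<psi> \<phi> i, fibre_restrict \<psi> zs i)) =
    qXY_Z (qXY (x, \<psi>, ys), \<phi>, zs)"
proof -
  let ?vs = "\<lambda>i. (ys i, fibm C \<psi> \<phi> i, fibre_restrict \<psi> zs i)" and ?g = "\<lambda>i. ide C (fib C \<psi> i)"
  have h: "\<psi> \<in> mor C" "x \<in> X" "dX x = tgt C \<psi>" "fibre_family Y dY \<psi> ys" using w unfolding tens_iff by auto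
  note \<psi>\<phi> = cmp_mor[OF \<phi>(1) h(1) \<phi>(2)] cmp_tgt[OF \<phi>(1) h(1) \<phi>(2)]
  have v: "rep_family x (cmp C \<psi> \<phi>) ?vs"
    unfolding rep_family_def using h \<psi>\<phi> tmap_assoc_tens(1,2)[OF w \<phi> zs] by auto
  have "fwtriv_factorization (cmp C \<psi> \<phi>) (rep_mor ?vs) \<psi> \<phi> ?g"
    unfolding fwtriv_factorization_def
    using h(1) \<phi> fib_ob[OF h(1)] ide_mor ide_src ide_tgt fwtriv_ide \<psi>\<phi>(2)
      cmp_ide_left[OF fibm_mor[OF h(1) \<phi>]] fibm_tgt[OF h(1) \<phi>] by auto
  from inv_rep_eq_lift[OF v this]
  have "inv_rep x (cmp C \<psi> \<phi>) ?vs = lift x ?vs \<psi> \<phi> ?g" .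
  moreover have "act_ys ?vs \<psi> ?g = ys"
  proof
    fix i
    show "act_ys ?vs \<psi> ?g i = ys i"
    proof (cases "i < ntgt \<psi>")
      case True
      then have "ys i \<in> Y" "dY (ys i) = fib C \<psi> i" using h(4) unfolding fibre_family_def by auto
      then show ?thesis using ract_ide[OF module_Y, of "ys i"] True unfolding act_ys_def by simp
    next
      case False
      then show ?thesis using h(4) unfolding act_ys_def fibre_family_def by simp
    qed
  qed
  moreover have "reindex (rep_z ?vs) \<psi> ?g \<phi> = zs"
    using reindex_ide[OF h(1) \<phi>(2) zs] by (simp add: eta_contract_eq)
  ultimately show ?thesis unfolding lift_def by simp
qed

lemma inv_cls_alpha:
  assumes t: "(Q, \<phi>, zs) \<in> XY_Z"
  shows "\<exists>u\<in>X_YZ. alpha_cls (Q, \<phi>, zs) = qX_YZ u \<and> inv_cls u = qXY_Z (Q, \<phi>, zs)"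
proof -
  have h: "\<phi> \<in> mor C" "Q \<in> XY" "smash_deg C Q = tgt C \<phi>" "fibre_family Z dZ \<phi> zs"
    using t unfolding tens_iff by auto
  note r = smash_some[OF action_closed_X h(2)]
  obtain x \<psi> ys where wx: "(SOME v. v \<in> Q) = (x, \<psi>, ys)" by (cases "SOME v. v \<in> Q")
  have w: "(x, \<psi>, ys) \<in> tens C X dX Y dY" "tgt C \<phi> = src C \<psi>"
    using r(1,3) h(3) wx by (auto simp: tdeg_simp)
  have \<psi>: "\<psi> \<in> mor C" using w(1) unfolding tens_iff by auto
  let ?vs = "\<lambda>i. (ys i, fibm C \<psi> \<phi> i, fibre_restrict \<psi> zs i)"
  let ?u = "tmap C id qYZ (assoc C ((x, \<psi>, ys), \<phi>, zs))"
  have u: "?u = (x, cmp C \<psi> \<phi>, \<lambda>i. if i < ntgt \<psi> then qYZ (?vs i) else undefined)"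
    using tmap_assoc[OF \<psi> h(1) w(2)] .
  have v: "rep_family x (cmp C \<psi> \<phi>) ?vs"
    using w(1) cmp_mor[OF h(1) \<psi> w(2)] cmp_tgt[OF h(1) \<psi> w(2)] tmap_assoc_tens(1,2)[OF w(1) h(1) w(2) h(4)]
    unfolding rep_family_def tens_iff by auto
  have "inv_cls ?u = inv_rep x (cmp C \<psi> \<phi>) (\<lambda>i. SOME v. v \<in> (if i < ntgt \<psi> then qYZ (?vs i) else undefined))"
    unfolding inv_cls_def u by simp
  also have "\<dots> = inv_rep x (cmp C \<psi> \<phi>) ?vs"
  proof (rule sym, rule inv_rep_smash_eq[OF v])
    fix i assume "i < ntgt (cmp C \<psi> \<phi>)"
    then show "(?vs i, SOME v. v \<in> (if i < ntgt \<psi> then qYZ (?vs i) else undefined)) \<in> smash_eq C Y dY rY Z dZ"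
      using smash_q_some[of "?vs i"] cmp_tgt[OF h(1) \<psi> w(2)] by simp
  qed
  also have "\<dots> = qXY_Z (Q, \<phi>, zs)"
    using inv_rep_assoc[OF w(1) h(1) w(2) h(4)] r(2) wx by simp
  finally show ?thesis
    using tmap_assoc_tens(3)[OF w(1) h(1) w(2) h(4)] wx unfolding alpha_cls_def alpha_q_def by auto
qed

lemma q_adjoint_component:
  assumes v: "rep_family x \<theta> vs" and B: "fwtriv_factorization \<theta> (rep_mor vs) \<psi>B \<phi>B \<sigma>"
    and i: "i < ntgt \<theta>"
  shows "qYZ (ract rY (rep_y vs i) (\<sigma> i), fibm C \<psi>B \<phi>B i, fibre_restrict \<psi>B (reindex (rep_z vs) \<psi>B \<sigma> \<phi>B) i)
    = qYZ (vs i)"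
proof -
  note b = fwtriv_factorizationD[OF B] and vi = rep_familyD[OF v i]
  note s = b(7)[OF i]
  have iB: "i < ntgt \<psi>B" using i b(5) by simp
  let ?\<beta> = "fibm C \<psi>B \<phi>B i" and ?z = "fibre_restrict \<psi>B (reindex (rep_z vs) \<psi>B \<sigma> \<phi>B) i"
  have \<beta>: "?\<beta> \<in> mor C" "tgt C ?\<beta> = src C (\<sigma> i)"
    using fibm_mor[OF b(1-3) iB] fibm_tgt[OF b(1-3) iB] s by auto
  have "pull (\<sigma> i) ?z = rep_z vs i"
  proof
    fix k
    show "pull (\<sigma> i) ?z k = rep_z vs i k"
    proof (cases "k < ntgt (\<sigma> i)")
      case True
      define m where "m = fenum (\<sigma> i) k 0"
      have mp: "m < crd C (fib C \<psi>B i)" "crdm C (\<sigma> i) m = k"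
        using fwtriv_fenum[of "\<sigma> i" k] s True unfolding m_def by auto
      define j where "j = fenum \<psi>B i m"
      have jp: "j < nsrc \<psi>B" "crdm C \<psi>B j = i" "frank \<psi>B i j = m"
        using fenum_props[OF b(1) iB mp(1)] unfolding j_def by auto
      have "j < ntgt \<phi>B" using jp(1) b(3) by simp
      then show ?thesis
        unfolding pull_def fibre_restrict_def reindex_def
        using True mp jp unfolding m_def[symmetric] j_def[symmetric] by simp
    next
      case False
      then have "ntgt (rep_mor vs i) \<le> k" using s vi(3) by simp
      then show ?thesis unfolding pull_def using False vi(4) unfolding fibre_family_def by simp
    qed
  qed
  moreover have "vs i = (rep_y vs i, cmp C (\<sigma> i) ?\<beta>, rep_z vs i)" using s by simp
  ultimately show ?thesis
    using smash_q_gen[OF smash_genI[of "rep_y vs i" Y "\<sigma> i" dY, OF vi(1) _ _ _ \<beta>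
          fibre_family_restrict[OF b(1-3) lift_tens(2)[OF v B] iB]]] s vi(3) by simp
qed

lemma alpha_cls_surj:
  assumes u: "(x, \<theta>, ws) \<in> X_YZ"
  shows "\<exists>t\<in>XY_Z. alpha_cls t = qX_YZ (x, \<theta>, ws)"
proof -
  have h: "fibre_family YZ (smash_deg C) \<theta> ws" using u unfolding tens_iff by auto
  let ?vs = "\<lambda>i. SOME v. v \<in> ws i"
  have v: "rep_family x \<theta> ?vs" using rep_family_some[OF u] .
  obtain \<psi>B \<phi>B \<sigma> where "adjoint_factorization \<theta> (rep_mor ?vs) = (\<psi>B, \<phi>B, \<sigma>)"
    "universal_factorization \<theta> (rep_mor ?vs) \<psi>B \<phi>B \<sigma>"
    using universal_rep_factorization[OF v] .
  note fB = this(2)[unfolded universal_factorization_def, THEN conjunct1]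
  note b = fwtriv_factorizationD[OF fB]
  let ?t = "(qXY (x, \<psi>B, act_ys ?vs \<psi>B \<sigma>), \<phi>B, reindex (rep_z ?vs) \<psi>B \<sigma> \<phi>B)"
  have "alpha_cls ?t = alpha_q (x, \<psi>B, act_ys ?vs \<psi>B \<sigma>) \<phi>B (reindex (rep_z ?vs) \<psi>B \<sigma> \<phi>B)"
    unfolding alpha_cls_def using alpha_q_some[OF lift_tens(1)[OF v fB] b(2) _ lift_tens(2)[OF v fB]] b(3)
    by (simp add: tdeg_simp)
  also have "\<dots> = qX_YZ (x, \<theta>, ws)"
  proof -
    have "qYZ (act_ys ?vs \<psi>B \<sigma> i, fibm C \<psi>B \<phi>B i, fibre_restrict \<psi>B (reindex (rep_z ?vs) \<psi>B \<sigma> \<phi>B) i) = ws i"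
      if i: "i < ntgt \<theta>" for i
    proof -
      have "ws i \<in> YZ" using h i unfolding fibre_family_def by simp
      then have "ws i = qYZ (?vs i)" using smash_some(2)[OF action_closed_Y] by blast
      then show ?thesis using q_adjoint_component[OF v fB i] b(5) i unfolding act_ys_def by simp
    qed
    then have "(\<lambda>i. if i < ntgt \<psi>B then qYZ (act_ys ?vs \<psi>B \<sigma> i, fibm C \<psi>B \<phi>B i,
        fibre_restrict \<psi>B (reindex (rep_z ?vs) \<psi>B \<sigma> \<phi>B) i) else undefined) = ws"
      using b(5) h unfolding fibre_family_def by (intro ext) auto
    then show ?thesis unfolding alpha_q_def tmap_assoc[OF b(1-3)] b(4) by simp
  qed
  finally show ?thesis using lift_tens(3)[OF v fB] by blast
qed

lemma smash_assoc_inj: "inj_on (smash_assoc C X dX rX Y dY rY Z dZ) (smash C XY (smash_deg C) rXY Z dZ)"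
proof (rule inj_onI)
  fix Q Q' assume "Q \<in> smash C XY (smash_deg C) rXY Z dZ" "Q' \<in> smash C XY (smash_deg C) rXY Z dZ"
    and eq: "smash_assoc C X dX rX Y dY rY Z dZ Q = smash_assoc C X dX rX Y dY rY Z dZ Q'"
  then obtain t t' where t: "t \<in> XY_Z" "Q = qXY_Z t" and t': "t' \<in> XY_Z" "Q' = qXY_Z t'"
    unfolding smash_iff by blast
  obtain u where u: "u \<in> X_YZ" "alpha_cls t = qX_YZ u" "inv_cls u = qXY_Z t"
    using inv_cls_alpha[of "fst t" "fst (snd t)" "snd (snd t)"] t(1) by auto
  obtain u' where u': "u' \<in> X_YZ" "alpha_cls t' = qX_YZ u'" "inv_cls u' = qXY_Z t'"
    using inv_cls_alpha[of "fst t'" "fst (snd t')" "snd (snd t')"] t'(1) by auto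
  have "qX_YZ u = qX_YZ u'" using eq smash_assoc_q[OF t(1)] smash_assoc_q[OF t'(1)] t(2) t'(2) u(2) u'(2)
    by simp
  then show "Q = Q'" using inv_cls_smash_eq smash_q_eq_iff u(3) u'(3) t(2) t'(2) by metis
qed

lemma smash_assoc_image:
  "smash_assoc C X dX rX Y dY rY Z dZ ` smash C XY (smash_deg C) rXY Z dZ = smash C X dX rX YZ (smash_deg C)"
proof
  show "smash_assoc C X dX rX Y dY rY Z dZ ` smash C XY (smash_deg C) rXY Z dZ \<subseteq> smash C X dX rX YZ (smash_deg C)"
  proof
    fix R assume "R \<in> smash_assoc C X dX rX Y dY rY Z dZ ` smash C XY (smash_deg C) rXY Z dZ"
    then obtain Q0 where "Q0 \<in> smash C XY (smash_deg C) rXY Z dZ" "R = smash_assoc C X dX rX Y dY rY Z dZ Q0"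
      by (rule imageE)
    then obtain t where t: "t \<in> XY_Z" "R = smash_assoc C X dX rX Y dY rY Z dZ (qXY_Z t)"
      unfolding smash_iff by blast
    moreover obtain Q \<phi> zs where "t = (Q, \<phi>, zs)" by (cases t)
    ultimately show "R \<in> smash C X dX rX YZ (smash_deg C)"
      using smash_assoc_q alpha_cls_in_smash by simp
  qed
  show "smash C X dX rX YZ (smash_deg C) \<subseteq> smash_assoc C X dX rX Y dY rY Z dZ ` smash C XY (smash_deg C) rXY Z dZ"
  proof
    fix R assume "R \<in> smash C X dX rX YZ (smash_deg C)"
    then obtain u where "u \<in> X_YZ" "R = qX_YZ u" unfolding smash_iff by blast
    moreover obtain x \<theta> ws where "u = (x, \<theta>, ws)" by (cases u)
    ultimately obtain t where "t \<in> XY_Z" "alpha_cls t = R" using alpha_cls_surj by blast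
    then show "R \<in> smash_assoc C X dX rX Y dY rY Z dZ ` smash C XY (smash_deg C) rXY Z dZ"
      using smash_q_in_smash[of t] smash_assoc_q[of t] by force
  qed
qed

end

theorem proposition9p8:
  fixes C :: "('o, 'm) opcat"
    and X :: "'a set" and dX :: "'a \<Rightarrow> 'o" and rX :: "('a \<times> 'm \<times> (nat \<Rightarrow> 'o)) \<Rightarrow> 'a"
    and Y :: "'b set" and dY :: "'b \<Rightarrow> 'o" and rY :: "('b \<times> 'm \<times> (nat \<Rightarrow> 'o)) \<Rightarrow> 'b"
    and Z :: "'c set" and dZ :: "'c \<Rightarrow> 'o" and rZ :: "('c \<times> 'm \<times> (nat \<Rightarrow> 'o)) \<Rightarrow> 'c"
  assumes "operadic_category C"
    and "weak_right_adjoint_hyp C"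
    and "rmodule C X dX rX"
    and "rmodule C Y dY rY"
    and "rmodule C Z dZ rZ"
  shows "bij_betw (smash_assoc C X dX rX Y dY rY Z dZ)
           (smash C (smash C X dX rX Y dY) (smash_deg C) (smash_act C X dX rX Y dY rY) Z dZ)
           (smash C X dX rX (smash C Y dY rY Z dZ) (smash_deg C))"
proof -
  interpret hopf_collections C X dX rX Y dY rY Z dZ
    by unfold_locales (use assms(1-4) in auto)
  show ?thesis
    unfolding bij_betw_def using smash_assoc_inj smash_assoc_image by blast
qed

end
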